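(* Let $p\in[1,\infty]$, $\alpha\in[0,1]$ irrational with rational approximants $\alpha_m$, $\theta\in[0,1)$, $\lambda\in\mathbb{R}$ and $E\in\mathbb{R}$. Set $A_m:=H_{\lambda,\alpha_m,0}-E$ and $A:=H_{\lambda,\alpha,\theta}-E$. Then $\nu(A)=\lim_{m\to\infty}\nu(A_m)$.
   Context: $(H_{\lambda,\beta,\theta}x)_n=x_{n+1}+x_{n-1}+\lambda v_{\beta,\theta}(n)x_n$ on $\ell^p(\mathbb{Z})$ with $v_{\beta,\theta}(n)=\chi_{[1-\beta,1)}(n\beta+\theta\bmod 1)$, for any $\beta\in[0,1]$ (rational or irrational). Rational approximants: for $\alpha=[a_1,a_2,\dots]$, $p_{-1}=1,p_0=0,p_n=a_np_{n-1}+p_{n-2}$, $q_{-1}=0,q_0=1,q_n=a_nq_{n-1}+q_{n-2}$, $\alpha_m=p_m/q_m$. Lower norm: $\nu(A)=\inf\{\|Ax\|:\|x\|=1\}$. *)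

theory Defs
  imports "HOL-Analysis.Analysis"
begin

definition lp_mem :: "ereal \<Rightarrow> (int \<Rightarrow> complex) \<Rightarrow> bool" where
  "lp_mem p x \<longleftrightarrow>
     (if p = \<infinity> then bdd_above (range (\<lambda>n. norm (x n)))
      else (\<lambda>n. norm (x n) powr real_of_ereal p) summable_on UNIV)"

definition lp_norm :: "ereal \<Rightarrow> (int \<Rightarrow> complex) \<Rightarrow> real" where
  "lp_norm p x =
     (if p = \<infinity> then (SUP n. norm (x n))
      else (\<Sum>\<^sub>\<infinity>n. norm (x n) powr real_of_ereal p) powr (1 / real_of_ereal p))"

definition lower_norm :: "ereal \<Rightarrow> ((int \<Rightarrow> complex) \<Rightarrow> (int \<Rightarrow> complex)) \<Rightarrow> real" where
  "lower_norm p A = Inf {lp_norm p (A x) | x. lp_mem p x \<and> lp_norm p x = 1}"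

definition sturm_pot :: "real \<Rightarrow> real \<Rightarrow> int \<Rightarrow> real" where
  "sturm_pot \<beta> \<theta> n = indicator {1 - \<beta> ..< 1} (frac (of_int n * \<beta> + \<theta>))"

definition sturm_H :: "real \<Rightarrow> real \<Rightarrow> real \<Rightarrow> (int \<Rightarrow> complex) \<Rightarrow> (int \<Rightarrow> complex)" where
  "sturm_H lam \<beta> \<theta> x = (\<lambda>n. x (n + 1) + x (n - 1) + of_real (lam * sturm_pot \<beta> \<theta> n) * x n)"

definition sturm_A :: "real \<Rightarrow> real \<Rightarrow> real \<Rightarrow> real \<Rightarrow> (int \<Rightarrow> complex) \<Rightarrow> (int \<Rightarrow> complex)" where
  "sturm_A lam \<beta> \<theta> E x = (\<lambda>n. sturm_H lam \<beta> \<theta> x n - of_real E * x n)"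

definition gauss_map :: "real \<Rightarrow> real" where
  "gauss_map x = frac (1 / x)"

text \<open>cf_digit alpha n = a_n for n >= 1, where alpha = 1/(a_1 + 1/(a_2 + ...)).\<close>
definition cf_digit :: "real \<Rightarrow> nat \<Rightarrow> int" where
  "cf_digit \<alpha> n = floor (1 / (gauss_map ^^ (n - 1)) \<alpha>)"

text \<open>p_0 = 0, p_1 = a_1 p_0 + p_{-1} = 1, p_n = a_n p_{n-1} + p_{n-2};
      q_0 = 1, q_1 = a_1 q_0 + q_{-1} = a_1, q_n = a_n q_{n-1} + q_{n-2}.\<close>
fun cf_p :: "real \<Rightarrow> nat \<Rightarrow> int" where
  "cf_p \<alpha> 0 = 0"
| "cf_p \<alpha> (Suc 0) = 1"
| "cf_p \<alpha> (Suc (Suc n)) = cf_digit \<alpha> (Suc (Suc n)) * cf_p \<alpha> (Suc n) + cf_p \<alpha> n"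

fun cf_q :: "real \<Rightarrow> nat \<Rightarrow> int" where
  "cf_q \<alpha> 0 = 1"
| "cf_q \<alpha> (Suc 0) = cf_digit \<alpha> 1"
| "cf_q \<alpha> (Suc (Suc n)) = cf_digit \<alpha> (Suc (Suc n)) * cf_q \<alpha> (Suc n) + cf_q \<alpha> n"

definition cf_approx :: "real \<Rightarrow> nat \<Rightarrow> real" where
  "cf_approx \<alpha> m = real_of_int (cf_p \<alpha> m) / real_of_int (cf_q \<alpha> m)"

end

theory Submission
  imports Defs
begin

text \<open>
  Write \<open>H - E\<close> as the discrete Schr\<ouml>dinger operator \<open>x \<mapsto> x(n+1) + x(n-1) + V(n) x(n)\<close>.
  Its lower norm is attained up to \<open>\<epsilon>\<close> by test vectors supported on intervals of a length
  \<open>L(\<epsilon>, p)\<close> that is uniform in the bounded potential \<open>V\<close>: for \<open>p = \<infinity>\<close> one multiplies a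
  near-minimiser by a tent of width \<open>L\<close> around a point where it is almost maximal; for finite
  \<open>p\<close> one truncates it and then cuts it into pieces with the partition of unity formed by the
  \<open>p\<close>-th roots of tents, whose commutator with the Laplacian is \<open>O(L\<^sup>-\<^sup>1\<^sup>/\<^sup>p)\<close>, so that
  one piece is almost as good as the whole vector.  Hence, if every window of length \<open>L\<close> of
  \<open>V\<close> occurs (up to translation) in \<open>W\<close>, then \<open>\<nu>(A\<^sub>W) \<le> \<nu>(A\<^sub>V) + \<epsilon>\<close>.

  For Sturmian potentials, \<open>v\<^sub>\<beta>\<^sub>,\<^sub>\<theta>(n) = \<lfloor>(n+1)\<beta> + \<theta>\<rfloor> - \<lfloor>n\<beta> + \<theta>\<rfloor>\<close>, so windows agree as soon
  as the floors agree after a shift. A fixed window of \<open>v\<^sub>\<alpha>\<^sub>,\<^sub>\<theta>\<close> occurs in \<open>v\<^sub>\<alpha>\<^sub>m\<^sub>,\<^sub>0\<close> for large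
  \<open>m\<close> since the values \<open>k p\<^sub>m/q\<^sub>m mod 1\<close> form the grid \<open>\<int>/q\<^sub>m\<close> and \<open>\<alpha>\<^sub>m \<rightarrow> \<alpha>\<close>; conversely, the
  floors of \<open>n p\<^sub>m/q\<^sub>m\<close> are stable under perturbations smaller than \<open>1/q\<^sub>m\<close>, and
  \<open>|\<alpha> - \<alpha>\<^sub>m| \<le> 1/q\<^sub>m\<^sup>2\<close> together with the density of \<open>k\<alpha> mod 1\<close> places every window of length
  \<open>L\<close> of \<open>v\<^sub>\<alpha>\<^sub>m\<^sub>,\<^sub>0\<close> inside \<open>v\<^sub>\<alpha>\<^sub>,\<^sub>\<theta>\<close> once \<open>q\<^sub>m > 4L + 4\<close>.
\<close>

section \<open>Continued fraction convergents\<close>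

definition cf_rem :: "real \<Rightarrow> nat \<Rightarrow> real" where
  "cf_rem \<alpha> k = (gauss_map ^^ k) \<alpha>"

lemma cf_rem_0 [simp]: "cf_rem \<alpha> 0 = \<alpha>"
  by (simp add: cf_rem_def)

lemma cf_rem_Suc: "cf_rem \<alpha> (Suc k) = frac (1 / cf_rem \<alpha> k)"
  by (simp add: cf_rem_def gauss_map_def)

lemma cf_digit_Suc: "cf_digit \<alpha> (Suc k) = \<lfloor>1 / cf_rem \<alpha> k\<rfloor>"
  by (simp add: cf_digit_def cf_rem_def)

lemma cf_rem_recurrence: "1 / cf_rem \<alpha> k = of_int (cf_digit \<alpha> (Suc k)) + cf_rem \<alpha> (Suc k)"
  by (simp add: cf_digit_Suc cf_rem_Suc frac_def)

lemma cf_rem_irrational: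
  assumes "0 < \<alpha>" "\<alpha> < 1" "\<alpha> \<notin> \<rat>"
  shows "0 < cf_rem \<alpha> k \<and> cf_rem \<alpha> k < 1 \<and> cf_rem \<alpha> k \<notin> \<rat>"
proof (induction k)
  case 0
  then show ?case using assms by simp
next
  case (Suc k)
  have "1 / cf_rem \<alpha> k \<notin> \<rat>"
  proof
    assume "1 / cf_rem \<alpha> k \<in> \<rat>"
    then have "1 / (1 / cf_rem \<alpha> k) \<in> \<rat>" by (rule Rats_divide[OF Rats_1])
    then show False using Suc by simp
  qed
  then show ?case using Ints_subset_Rats by (auto simp: cf_rem_Suc frac_lt_1)
qed

lemma cf_q_ge:
  assumes "\<And>k. cf_digit \<alpha> (Suc k) \<ge> 1"
  shows "1 \<le> cf_q \<alpha> m \<and> int m \<le> cf_q \<alpha> m"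
  using assms
proof (induction \<alpha> m rule: cf_q.induct)
  case (3 \<alpha> n)
  note IH = "3.IH"(1)[OF "3.prems"] "3.IH"(2)[OF "3.prems"]
  have "cf_q \<alpha> (Suc n) \<le> cf_digit \<alpha> (Suc (Suc n)) * cf_q \<alpha> (Suc n)"
    using IH "3.prems" by (simp add: mult_le_cancel_right1)
  then have "cf_q \<alpha> (Suc n) + cf_q \<alpha> n \<le> cf_q \<alpha> (Suc (Suc n))" by simp
  then show ?case using IH by linarith
qed simp_all

lemma cf_p_bounds:
  assumes "\<And>k. cf_digit \<alpha> (Suc k) \<ge> 1"
  shows "0 \<le> cf_p \<alpha> m \<and> cf_p \<alpha> m \<le> cf_q \<alpha> m"
  using assms
proof (induction \<alpha> m rule: cf_p.induct)
  case (3 \<alpha> n)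
  note IH = "3.IH"(1)[OF "3.prems"] "3.IH"(2)[OF "3.prems"]
  have a: "0 \<le> cf_digit \<alpha> (Suc (Suc n))" using "3.prems"[of "Suc n"] by simp
  then have "cf_digit \<alpha> (Suc (Suc n)) * cf_p \<alpha> (Suc n) \<le> cf_digit \<alpha> (Suc (Suc n)) * cf_q \<alpha> (Suc n)"
    using IH by (intro mult_left_mono) auto
  moreover have "0 \<le> cf_digit \<alpha> (Suc (Suc n)) * cf_p \<alpha> (Suc n)" using a IH by simp
  ultimately show ?case using IH by simp
qed (use cf_q_ge[of _ 1] in simp_all)

lemma cf_det: "cf_p \<alpha> (Suc m) * cf_q \<alpha> m - cf_p \<alpha> m * cf_q \<alpha> (Suc m) = (-1) ^ m"
proof (induction m)
  case (Suc m)
  then show ?case by (simp add: algebra_simps)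
qed simp

lemma cf_approx_bezout: "\<exists>u v. u * cf_p \<alpha> m + v * cf_q \<alpha> m = 1"
proof -
  define \<sigma> :: int where "\<sigma> = (-1) ^ m"
  have "\<sigma> * \<sigma> = 1" by (simp add: \<sigma>_def minus_one_power_iff)
  then have "\<sigma> * (cf_p \<alpha> (Suc m) * cf_q \<alpha> m - cf_p \<alpha> m * cf_q \<alpha> (Suc m)) = 1"
    by (simp add: cf_det \<sigma>_def)
  then have "(- \<sigma> * cf_q \<alpha> (Suc m)) * cf_p \<alpha> m + (\<sigma> * cf_p \<alpha> (Suc m)) * cf_q \<alpha> m = 1"
    by (simp add: algebra_simps)
  then show ?thesis by blast
qed

text \<open>If \<open>P\<close> and \<open>Q\<close> are coprime, the points \<open>k P / Q - j\<close> form the lattice \<open>\<int> / Q\<close>.\<close>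
lemma bezout_mesh:
  fixes P Q u v :: int and s :: real
  assumes "u * P + v * Q = 1" "Q > 0"
  obtains k j :: int where "s \<le> of_int k * of_int P / of_int Q - of_int j"
    "of_int k * of_int P / of_int Q - of_int j < s + 1 / of_int Q"
proof
  define r where "r = \<lceil>s * Q\<rceil>"
  have Q: "real_of_int Q > 0" using assms(2) by simp
  have "real_of_int (u * r) * P = r - r * v * Q"
    using arg_cong[OF assms(1), of "\<lambda>z. real_of_int (r * z)"] by (simp add: algebra_simps)
  then have eq: "real_of_int (u * r) * P / Q - of_int (- r * v) = r / Q"
    using Q by (simp add: diff_divide_distrib)
  have "s * Q \<le> r" "r < s * Q + 1" unfolding r_def by linarith+
  then have "s \<le> r / Q" "r / Q < (s * Q + 1) / Q"
    using Q by (simp_all add: pos_le_divide_eq divide_strict_right_mono)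
  then show "s \<le> of_int (u * r) * of_int P / of_int Q - of_int (- r * v)"
    "of_int (u * r) * of_int P / of_int Q - of_int (- r * v) < s + 1 / of_int Q"
    using Q by (simp_all only: eq) (simp add: add_divide_distrib)
qed

locale irrational_in_unit_interval =
  fixes \<alpha> :: real
  assumes pos: "0 < \<alpha>" and less_1: "\<alpha> < 1" and irrational: "\<alpha> \<notin> \<rat>"
begin

lemma cf_rem_pos: "0 < cf_rem \<alpha> k" and cf_rem_less_1: "cf_rem \<alpha> k < 1"
  using cf_rem_irrational[OF pos less_1 irrational] by auto

lemma cf_digit_ge_1: "cf_digit \<alpha> (Suc k) \<ge> 1"
proof -
  have "1 \<le> 1 / cf_rem \<alpha> k" using cf_rem_pos[of k] cf_rem_less_1[of k] by simp
  then show ?thesis by (simp add: cf_digit_Suc le_floor_iff)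
qed

lemma cf_q_pos: "1 \<le> cf_q \<alpha> m"
  using cf_q_ge[OF cf_digit_ge_1] by simp

lemma cf_q_ge_index: "real m \<le> real_of_int (cf_q \<alpha> m)"
  using cf_q_ge[OF cf_digit_ge_1, of m] by linarith

lemma cf_approx_nonneg: "0 \<le> cf_approx \<alpha> m" and cf_approx_le_1: "cf_approx \<alpha> m \<le> 1"
  using cf_q_pos[of m] cf_p_bounds[OF cf_digit_ge_1, of m] by (auto simp: cf_approx_def)

lemma cf_value:
  "\<alpha> = (cf_p \<alpha> (Suc m) + cf_rem \<alpha> (Suc m) * cf_p \<alpha> m) / (cf_q \<alpha> (Suc m) + cf_rem \<alpha> (Suc m) * cf_q \<alpha> m)"
proof (induction m)
  case 0
  have "cf_digit \<alpha> 1 + cf_rem \<alpha> 1 = 1 / \<alpha>" using cf_rem_recurrence[of \<alpha> 0] by simp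
  then have "\<alpha> = 1 / (cf_digit \<alpha> 1 + cf_rem \<alpha> 1)" by simp
  then show ?case by (simp add: add.commute)
next
  case (Suc m)
  define t where "t = cf_rem \<alpha> (Suc m)"
  define t' where "t' = cf_rem \<alpha> (Suc (Suc m))"
  define a where "a = real_of_int (cf_digit \<alpha> (Suc (Suc m)))"
  have "t = 1 / (1 / t)" by simp
  also have "1 / t = a + t'" using cf_rem_recurrence[of \<alpha> "Suc m"] by (simp add: t_def t'_def a_def)
  finally have t: "t = 1 / (a + t')" .
  have c: "a + t' > 0" using cf_digit_ge_1[of "Suc m"] cf_rem_pos[of "Suc (Suc m)"] by (simp add: a_def t'_def)
  define P1 P0 Q1 Q0 where "P1 = real_of_int (cf_p \<alpha> (Suc m))" and "P0 = real_of_int (cf_p \<alpha> m)"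
    and "Q1 = real_of_int (cf_q \<alpha> (Suc m))" and "Q0 = real_of_int (cf_q \<alpha> m)"
  have "\<alpha> = (P1 + t * P0) / (Q1 + t * Q0)"
    using Suc.IH unfolding P1_def P0_def Q1_def Q0_def t_def .
  also have "\<dots> = ((a + t') * (P1 + t * P0)) / ((a + t') * (Q1 + t * Q0))"
    using c by simp
  also have "\<dots> = ((a + t') * P1 + P0) / ((a + t') * Q1 + Q0)"
  proof -
    have tt: "(a + t') * t = 1" using c by (simp add: t)
    have "(a + t') * (P1 + t * P0) = (a + t') * P1 + P0" "(a + t') * (Q1 + t * Q0) = (a + t') * Q1 + Q0"
      by (simp_all only: distrib_left mult.assoc[symmetric] tt mult_1)
    then show ?thesis by (simp only:)
  qed
  also have "\<dots> = (a * P1 + P0 + t' * P1) / (a * Q1 + Q0 + t' * Q1)"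
    by (simp add: algebra_simps)
  finally have val: "\<alpha> = (a * P1 + P0 + t' * P1) / (a * Q1 + Q0 + t' * Q1)" .
  have pq: "a * P1 + P0 = cf_p \<alpha> (Suc (Suc m))" "a * Q1 + Q0 = cf_q \<alpha> (Suc (Suc m))"
    by (simp_all add: a_def P1_def P0_def Q1_def Q0_def)
  from val have "\<alpha> = (cf_p \<alpha> (Suc (Suc m)) + t' * P1) / (cf_q \<alpha> (Suc (Suc m)) + t' * Q1)"
    unfolding pq .
  then show ?case unfolding P1_def Q1_def t'_def .
qed

lemma cf_approx_error: "\<bar>\<alpha> - cf_approx \<alpha> (Suc m)\<bar> \<le> 1 / (real_of_int (cf_q \<alpha> (Suc m)))\<^sup>2"
proof -
  define t where "t = cf_rem \<alpha> (Suc m)"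
  define P1 P0 Q1 Q0 where "P1 = real_of_int (cf_p \<alpha> (Suc m))" and "P0 = real_of_int (cf_p \<alpha> m)"
    and "Q1 = real_of_int (cf_q \<alpha> (Suc m))" and "Q0 = real_of_int (cf_q \<alpha> m)"
  have t: "0 < t" "t < 1" using cf_rem_pos cf_rem_less_1 by (auto simp: t_def)
  have Q: "Q1 \<ge> 1" "Q0 \<ge> 1" using cf_q_pos by (simp_all add: Q1_def Q0_def)
  have det: "\<bar>P1 * Q0 - P0 * Q1\<bar> = 1"
    using arg_cong[OF cf_det[of \<alpha> m], of real_of_int] by (simp add: P1_def P0_def Q1_def Q0_def)
  have val: "\<alpha> = (P1 + t * P0) / (Q1 + t * Q0)"
    using cf_value[of m] unfolding P1_def P0_def Q1_def Q0_def t_def .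
  have pos: "Q1 + t * Q0 > 0" using t Q by (simp add: add_pos_pos)
  then have "\<alpha> - P1 / Q1 = ((P1 + t * P0) * Q1 - P1 * (Q1 + t * Q0)) / ((Q1 + t * Q0) * Q1)"
    using Q by (simp add: val diff_frac_eq)
  also have "\<dots> = t * (P0 * Q1 - P1 * Q0) / (Q1 * (Q1 + t * Q0))"
    by (simp add: algebra_simps)
  finally have "\<bar>\<alpha> - P1 / Q1\<bar> = t / (Q1 * (Q1 + t * Q0))"
    using det t Q by (simp add: abs_mult abs_minus_commute)
  also have "\<dots> \<le> t / (Q1 * Q1)"
    using t Q pos by (intro divide_left_mono mult_left_mono) (auto intro: mult_pos_pos)
  also have "\<dots> \<le> 1 / Q1\<^sup>2"
    using t Q by (simp add: power2_eq_square divide_right_mono)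
  finally show ?thesis by (simp add: cf_approx_def P1_def Q1_def)
qed

lemma cf_approx_error_mult:
  assumes "0 < m"
  shows "real_of_int (cf_q \<alpha> m) * \<bar>\<alpha> - cf_approx \<alpha> m\<bar> \<le> 1 / real_of_int (cf_q \<alpha> m)"
proof -
  obtain m' where m: "m = Suc m'" using assms by (cases m) auto
  have "1 \<le> real_of_int (cf_q \<alpha> m)" using cf_q_pos[of m] by simp
  then show ?thesis using cf_approx_error[of m'] by (simp add: m field_simps power2_eq_square)
qed

lemma cf_q_at_top: "filterlim (\<lambda>m. real_of_int (cf_q \<alpha> m)) at_top sequentially"
  by (rule filterlim_at_top_mono[OF filterlim_real_sequentially]) (use cf_q_ge_index in auto)

lemma cf_approx_tendsto: "cf_approx \<alpha> \<longlonglongrightarrow> \<alpha>"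
proof -
  have "norm (cf_approx \<alpha> m - \<alpha>) \<le> inverse (real_of_int (cf_q \<alpha> m))" if "0 < m" for m
  proof -
    define q where "q = real_of_int (cf_q \<alpha> m)"
    have q: "1 \<le> q" using cf_q_pos[of m] by (simp add: q_def)
    then have "1 / q \<le> 1" by simp
    then have "\<bar>\<alpha> - cf_approx \<alpha> m\<bar> * q \<le> 1"
      using cf_approx_error_mult[OF that] by (simp add: q_def mult.commute)
    then show ?thesis using q by (simp add: q_def abs_minus_commute pos_le_divide_eq field_simps)
  qed
  then have "\<forall>\<^sub>F m in sequentially. norm (cf_approx \<alpha> m - \<alpha>) \<le> inverse (real_of_int (cf_q \<alpha> m))"
    by (auto simp: eventually_sequentially intro: exI[of _ 1])
  then have "(\<lambda>m. cf_approx \<alpha> m - \<alpha>) \<longlonglongrightarrow> 0"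
    by (rule Lim_null_comparison) (rule tendsto_inverse_0_at_top[OF cf_q_at_top])
  then show ?thesis by (simp add: Lim_null[of _ \<alpha>])
qed

lemma cf_approx_mesh:
  obtains k j :: int where "s \<le> of_int k * cf_approx \<alpha> m - of_int j"
    "of_int k * cf_approx \<alpha> m - of_int j < s + 1 / of_int (cf_q \<alpha> m)"
proof -
  obtain u v where "u * cf_p \<alpha> m + v * cf_q \<alpha> m = 1" using cf_approx_bezout by blast
  moreover have "0 < cf_q \<alpha> m" using cf_q_pos[of m] by simp
  ultimately obtain k j :: int where "s \<le> of_int k * of_int (cf_p \<alpha> m) / of_int (cf_q \<alpha> m) - of_int j"
    "of_int k * of_int (cf_p \<alpha> m) / of_int (cf_q \<alpha> m) - of_int j < s + 1 / of_int (cf_q \<alpha> m)"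
    by (rule bezout_mesh)
  then show ?thesis using that by (simp add: cf_approx_def)
qed

end

section \<open>Finite sums and the spaces \<open>\<ell>\<^sup>p(\<int>)\<close>\<close>

lemma powr_add_le:
  fixes u w r :: real
  assumes "u \<ge> 0" "w \<ge> 0" "r \<ge> 1"
  shows "(u + w) powr r \<le> 2 powr r * (u powr r + w powr r)"
proof -
  have "(u + w) powr r \<le> (2 * max u w) powr r" using assms by (intro powr_mono2) auto
  also have "\<dots> = 2 powr r * max u w powr r" using assms by (simp add: powr_mult)
  also have "max u w powr r \<le> u powr r + w powr r" by (simp add: max_def)
  finally show ?thesis by simp
qed

lemma norm_add_powr_le:
  fixes u v :: "'a::real_normed_vector"
  assumes "1 \<le> r"
  shows "norm (u + v) powr r \<le> 2 powr r * (norm u powr r + norm v powr r)"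
proof -
  have "norm (u + v) powr r \<le> (norm u + norm v) powr r"
    using assms by (intro powr_mono2 norm_triangle_ineq) auto
  also have "\<dots> \<le> 2 powr r * (norm u powr r + norm v powr r)"
    using assms by (intro powr_add_le) auto
  finally show ?thesis .
qed

lemma powr_root_diff_le:
  fixes a b r :: real
  assumes "a \<ge> 0" "b \<ge> 0" "r \<ge> 1"
  shows "\<bar>a powr (1/r) - b powr (1/r)\<bar> powr r \<le> \<bar>a - b\<bar>"
proof -
  have main: "(x powr (1/r) - y powr (1/r)) powr r \<le> x - y" if xy: "0 \<le> y" "y \<le> x" for x y :: real
  proof -
    define u where "u = x powr (1/r) - y powr (1/r)"
    define w where "w = y powr (1/r)"
    have u: "u \<ge> 0" using xy assms by (simp add: u_def powr_mono2)
    have w: "w \<ge> 0" by (simp add: w_def)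
    have "u powr r = u * u powr (r - 1)" using u by (simp add: powr_mult_base)
    also have "\<dots> \<le> u * (u + w) powr (r - 1)" using u w assms by (intro mult_left_mono powr_mono2) auto
    finally have "u powr r \<le> u * (u + w) powr (r - 1)" .
    moreover have "w powr r = w * w powr (r - 1)" using w by (simp add: powr_mult_base)
    then have "w powr r \<le> w * (u + w) powr (r - 1)"
      using u w assms by (simp add: mult_left_mono powr_mono2)
    moreover have "u * (u + w) powr (r - 1) + w * (u + w) powr (r - 1) = (u + w) powr r"
      using u w by (simp add: powr_mult_base flip: distrib_right)
    ultimately have "u powr r + w powr r \<le> (u + w) powr r" by linarith
    moreover have "(u + w) powr r = x" "w powr r = y" using xy assms by (simp_all add: u_def w_def powr_powr)
    ultimately show ?thesis by (simp add: u_def)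
  qed
  show ?thesis
  proof (cases "b \<le> a")
    case True
    then show ?thesis using main[of b a] assms powr_mono2[of "1/r" b a] by simp
  next
    case False
    then show ?thesis using main[of a b] assms powr_mono2[of "1/r" a b] by (simp add: abs_minus_commute)
  qed
qed

lemma powr_convex_comb_le:
  fixes r t u w :: real
  assumes "r \<ge> 1" "0 \<le> t" "t \<le> 1" "u \<ge> 0" "w \<ge> 0"
  shows "(t * u + (1 - t) * w) powr r \<le> t * u powr r + (1 - t) * w powr r"
proof (cases "u = 0 \<or> w = 0")
  case True
  have sub: "s powr r \<le> s" if "0 \<le> s" "s \<le> 1" for s :: real
    using powr_mono'[of 1 r s] that assms(1) by simp
  show ?thesis
  proof (cases "u = 0")
    case True
    have "((1 - t) * w) powr r = (1 - t) powr r * w powr r" using assms by (simp add: powr_mult)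
    also have "\<dots> \<le> (1 - t) * w powr r" using sub[of "1 - t"] assms by (intro mult_right_mono) auto
    finally show ?thesis using True by simp
  next
    case False
    then have "w = 0" using \<open>u = 0 \<or> w = 0\<close> by simp
    have "(t * u) powr r = t powr r * u powr r" using assms by (simp add: powr_mult)
    also have "\<dots> \<le> t * u powr r" using sub[of t] assms by (intro mult_right_mono) auto
    finally show ?thesis using \<open>w = 0\<close> by simp
  qed
next
  case False
  then have "u \<in> {0<..}" "w \<in> {0<..}" using assms by auto
  from convex_onD[OF powr_convex[OF assms(1)], of "1 - t" u w, OF _ _ this] assms
  show ?thesis by (simp add: algebra_simps)
qed

lemma powr_add_le_weighted:
  fixes f g r t :: real
  assumes "1 \<le> r" "0 < t" "t < 1" "0 \<le> f" "0 \<le> g"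
  shows "(f + g) powr r \<le> t powr (1 - r) * f powr r + (1 - t) powr (1 - r) * g powr r"
proof -
  have "(f + g) powr r \<le> t * (f / t) powr r + (1 - t) * (g / (1 - t)) powr r"
    using powr_convex_comb_le[OF assms(1), of t "f / t" "g / (1 - t)"] assms by simp
  then show ?thesis using assms by (simp add: powr_divide powr_diff)
qed

text \<open>With \<open>t = A / (A + B)\<close>, where \<open>A\<close> and \<open>B\<close> are the norms of \<open>f\<close> and \<open>g\<close>, the
  pointwise bound \<open>powr_add_le_weighted\<close> sums up to \<open>(A + B)\<^sup>r\<close>.\<close>
lemma minkowski_sum:
  fixes f g :: "'a \<Rightarrow> real"
  assumes fin: "finite S" and r: "r \<ge> 1" and f0: "\<And>i. f i \<ge> 0" and g0: "\<And>i. g i \<ge> 0"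
  shows "(\<Sum>i\<in>S. (f i + g i) powr r) powr (1/r)
    \<le> (\<Sum>i\<in>S. f i powr r) powr (1/r) + (\<Sum>i\<in>S. g i powr r) powr (1/r)"
proof -
  define A where "A = (\<Sum>i\<in>S. f i powr r) powr (1/r)"
  define B where "B = (\<Sum>i\<in>S. g i powr r) powr (1/r)"
  have SA: "(\<Sum>i\<in>S. f i powr r) = A powr r" and SB: "(\<Sum>i\<in>S. g i powr r) = B powr r"
    unfolding A_def B_def using r by (simp_all add: powr_powr sum_nonneg)
  consider "A = 0" | "B = 0" | "A > 0" "B > 0" by (force simp: A_def B_def)
  then show ?thesis
  proof cases
    case 1
    then have "\<forall>i\<in>S. f i = 0" using SA fin f0 by (simp add: sum_nonneg_eq_0_iff)
    then show ?thesis by (simp add: A_def[symmetric] 1)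
  next
    case 2
    then have "\<forall>i\<in>S. g i = 0" using SB fin g0 by (simp add: sum_nonneg_eq_0_iff)
    then show ?thesis by (simp add: B_def[symmetric] 2)
  next
    case 3
    define t where "t = A / (A + B)"
    have t: "0 < t" "t < 1" "1 - t = B / (A + B)" using 3 by (auto simp: t_def field_simps)
    have part: "(X / (A + B)) powr (1 - r) * X powr r = X * (A + B) powr (r - 1)" if "X > 0" for X
    proof -
      have "X powr (1 - r) * X powr r = X" using that by (subst powr_add[symmetric]) simp
      then have "(X / (A + B)) powr (1 - r) * X powr r = X / (A + B) powr (1 - r)"
        by (simp add: powr_divide)
      then show ?thesis using powr_minus_divide[of "A + B" "1 - r"] by simp
    qed
    have A_part: "t powr (1 - r) * A powr r = A * (A + B) powr (r - 1)"
      using part[of A] 3 by (simp add: t_def)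
    have B_part: "(1 - t) powr (1 - r) * B powr r = B * (A + B) powr (r - 1)"
      using part[of B] 3 by (simp add: t(3))
    have "(\<Sum>i\<in>S. (f i + g i) powr r)
        \<le> (\<Sum>i\<in>S. t powr (1 - r) * f i powr r + (1 - t) powr (1 - r) * g i powr r)"
      using powr_add_le_weighted[OF r t(1,2) f0 g0] by (rule sum_mono)
    also have "\<dots> = t powr (1 - r) * A powr r + (1 - t) powr (1 - r) * B powr r"
      by (simp add: sum.distrib SA SB flip: sum_distrib_left)
    also have "\<dots> = (A + B) * (A + B) powr (r - 1)"
      unfolding A_part B_part by (simp add: algebra_simps)
    also have "\<dots> = (A + B) powr r" using 3 by (simp add: powr_mult_base)
    finally have "(\<Sum>i\<in>S. (f i + g i) powr r) powr (1/r) \<le> ((A + B) powr r) powr (1/r)"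
      using r by (intro powr_mono2) (auto intro: sum_nonneg)
    also have "\<dots> = A + B" using 3 r by (simp add: powr_powr)
    finally show ?thesis by (simp add: A_def B_def)
  qed
qed

lemma minkowski_sum_norm:
  fixes x y :: "'a \<Rightarrow> 'b::real_normed_vector"
  assumes "finite S" "r \<ge> 1"
  shows "(\<Sum>i\<in>S. norm (x i + y i) powr r) powr (1/r)
    \<le> (\<Sum>i\<in>S. norm (x i) powr r) powr (1/r) + (\<Sum>i\<in>S. norm (y i) powr r) powr (1/r)"
proof -
  have "(\<Sum>i\<in>S. norm (x i + y i) powr r) \<le> (\<Sum>i\<in>S. (norm (x i) + norm (y i)) powr r)"
    using assms(2) by (intro sum_mono powr_mono2) (auto intro: norm_triangle_ineq)
  then have "(\<Sum>i\<in>S. norm (x i + y i) powr r) powr (1/r) \<le> (\<Sum>i\<in>S. (norm (x i) + norm (y i)) powr r) powr (1/r)"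
    using assms(2) by (intro powr_mono2) (auto intro: sum_nonneg)
  also have "\<dots> \<le> (\<Sum>i\<in>S. norm (x i) powr r) powr (1/r) + (\<Sum>i\<in>S. norm (y i) powr r) powr (1/r)"
    using assms by (intro minkowski_sum) auto
  finally show ?thesis .
qed

lemma summable_on_tail_small:
  fixes g :: "int \<Rightarrow> real"
  assumes "g summable_on UNIV" "\<And>n. 0 \<le> g n" "0 < \<delta>"
  obtains N :: int where "1 \<le> N" "infsum g UNIV - \<delta> < (\<Sum>n\<in>{-N..N}. g n)" "\<And>n. N \<le> \<bar>n\<bar> \<Longrightarrow> g n < \<delta>"
proof -
  have "eventually (\<lambda>F. dist (sum g F) (infsum g UNIV) < \<delta>) (finite_subsets_at_top UNIV)"
    using tendstoD[OF infsum_tendsto[OF assms(1)] assms(3)] .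
  then obtain F0 where "finite F0" "\<forall>F. finite F \<and> F0 \<subseteq> F \<and> F \<subseteq> UNIV \<longrightarrow> dist (sum g F) (infsum g UNIV) < \<delta>"
    unfolding eventually_finite_subsets_at_top by (elim exE conjE)
  then have F0: "finite F0" "\<And>F. finite F \<Longrightarrow> F0 \<subseteq> F \<Longrightarrow> dist (sum g F) (infsum g UNIV) < \<delta>"
    by simp_all
  define N where "N = Max (insert 0 (abs ` F0)) + 1"
  have "\<bar>m\<bar> < N" if "m \<in> F0" for m
    using that F0(1) Max_ge[of "insert 0 (abs ` F0)" "\<bar>m\<bar>"] by (simp add: N_def)
  then have F0_N: "F0 \<subseteq> {-N..N}" and N_F0: "\<And>n. N \<le> \<bar>n\<bar> \<Longrightarrow> n \<notin> F0" by force+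
  have lower: "infsum g UNIV - \<delta> < sum g F" if "finite F" "F0 \<subseteq> F" for F
    using F0(2)[OF that] by (simp add: dist_real_def abs_less_iff)
  show ?thesis
  proof
    show "1 \<le> N" using F0(1) by (simp add: N_def)
    show "infsum g UNIV - \<delta> < (\<Sum>n\<in>{-N..N}. g n)" using lower[OF _ F0_N] by simp
    show "g n < \<delta>" if "N \<le> \<bar>n\<bar>" for n
    proof -
      have "sum g (insert n F0) \<le> infsum g UNIV" by (rule finite_sum_le_infsum) (use assms F0 in auto)
      then have "g n + sum g F0 \<le> infsum g UNIV" using N_F0[OF that] F0(1) by simp
      then show ?thesis using lower[OF F0(1) order_refl] by linarith
    qed
  qed
qed

lemma powr_root_le_iff:
  fixes x y c r :: real
  assumes "1 \<le> r" "0 \<le> x" "0 \<le> y" "0 \<le> c"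
  shows "x powr (1 / r) \<le> c * y powr (1 / r) \<longleftrightarrow> x \<le> c powr r * y"
proof -
  define z where "z = c powr r * y"
  have z: "0 \<le> z" and cz: "c * y powr (1 / r) = z powr (1 / r)"
    using assms by (simp_all add: z_def powr_mult powr_powr)
  have "x powr (1 / r) \<le> z powr (1 / r) \<longleftrightarrow> x \<le> z"
  proof
    assume le: "x powr (1 / r) \<le> z powr (1 / r)"
    have "(x powr (1 / r)) powr r \<le> (z powr (1 / r)) powr r"
      by (rule powr_mono2[OF _ _ le]) (use assms in auto)
    moreover have "(x powr (1 / r)) powr r = x" "(z powr (1 / r)) powr r = z"
      using assms z by (simp_all add: powr_powr)
    ultimately show "x \<le> z" by simp
  qed (use assms in \<open>intro powr_mono2, auto\<close>)
  then show ?thesis by (simp add: cz z_def)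
qed

lemma sum_le_mult_sum_imp_ex:
  fixes Z A :: "'a \<Rightarrow> real"
  assumes "finite J" "\<And>j. 0 \<le> Z j" "\<And>j. 0 \<le> A j" "sum A J \<le> C * sum Z J" "0 < sum Z J"
  obtains j where "j \<in> J" "0 < Z j" "A j \<le> C * Z j"
proof -
  have "\<exists>j\<in>J. 0 < Z j \<and> A j \<le> C * Z j"
  proof (rule ccontr)
    assume "\<not> ?thesis"
    then have less: "C * Z j < A j" if "j \<in> J" "0 < Z j" for j using that by auto
    have le: "C * Z j \<le> A j" if "j \<in> J" for j
      using less[OF that] assms(2)[of j] assms(3)[of j] by (cases "Z j = 0") auto
    obtain j0 where "j0 \<in> J" "0 < Z j0" using assms(5) by (meson linorder_not_le sum_nonpos)
    then have "(\<Sum>j\<in>J. C * Z j) < sum A J"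
      using le less by (intro sum_strict_mono_ex1[OF assms(1)]) auto
    then show False using assms(4) by (simp add: sum_distrib_left)
  qed
  then show ?thesis using that by blast
qed

lemma real_of_ereal_ge_1: "1 \<le> p \<Longrightarrow> p \<noteq> \<infinity> \<Longrightarrow> 1 \<le> real_of_ereal p"
  by (cases p) auto

lemma lp_norm_inf_upper:
  assumes "bdd_above (range (\<lambda>n. norm (x n)))"
  shows "norm (x n) \<le> lp_norm \<infinity> x"
  unfolding lp_norm_def using cSUP_upper[OF UNIV_I assms] by simp

lemma lp_norm_inf_least: "(\<And>n. norm (x n) \<le> B) \<Longrightarrow> lp_norm \<infinity> x \<le> B"
  unfolding lp_norm_def by (simp add: cSUP_least)

lemma lp_norm_nonneg:
  assumes "lp_mem p x"
  shows "0 \<le> lp_norm p x"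
proof (cases "p = \<infinity>")
  case True
  then have "norm (x 0) \<le> lp_norm p x" using assms lp_norm_inf_upper by (simp add: lp_mem_def)
  then show ?thesis using norm_ge_zero order_trans by blast
qed (simp add: lp_norm_def)

lemma lp_mem_finite_support:
  assumes "finite S" "{n. x n \<noteq> 0} \<subseteq> S"
  shows "lp_mem p x"
proof (cases "p = \<infinity>")
  case True
  have "range (\<lambda>n. norm (x n)) \<subseteq> insert 0 ((\<lambda>n. norm (x n)) ` S)" using assms(2) by auto
  then have "bdd_above (range (\<lambda>n. norm (x n)))"
    using assms(1) by (meson bdd_above_finite bdd_above_mono finite_imageI finite_insert)
  then show ?thesis using True by (simp add: lp_mem_def)
next
  case False
  have "(\<lambda>n. norm (x n) powr real_of_ereal p) summable_on S \<longleftrightarrow>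
      (\<lambda>n. norm (x n) powr real_of_ereal p) summable_on UNIV"
    by (rule summable_on_cong_neutral) (use assms(2) in auto)
  then have "(\<lambda>n. norm (x n) powr real_of_ereal p) summable_on UNIV" using assms(1) by simp
  then show ?thesis using False by (simp add: lp_mem_def)
qed

lemma lp_norm_finite_support:
  assumes "p \<noteq> \<infinity>" "finite S" "{n. x n \<noteq> 0} \<subseteq> S"
  shows "lp_norm p x = (\<Sum>n\<in>S. norm (x n) powr real_of_ereal p) powr (1 / real_of_ereal p)"
proof -
  have "(\<Sum>\<^sub>\<infinity>n. norm (x n) powr real_of_ereal p) = (\<Sum>\<^sub>\<infinity>n\<in>S. norm (x n) powr real_of_ereal p)"
    by (rule infsum_cong_neutral) (use assms(3) in auto)
  then show ?thesis using assms(1,2) by (simp add: lp_norm_def)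
qed

lemma lp_norm_ge_finite_sum:
  assumes "1 \<le> p" "p \<noteq> \<infinity>" "lp_mem p x" "finite S"
  shows "(\<Sum>n\<in>S. norm (x n) powr real_of_ereal p) powr (1 / real_of_ereal p) \<le> lp_norm p x"
proof -
  have "(\<Sum>n\<in>S. norm (x n) powr real_of_ereal p) \<le> (\<Sum>\<^sub>\<infinity>n. norm (x n) powr real_of_ereal p)"
    by (rule finite_sum_le_infsum) (use assms in \<open>auto simp: lp_mem_def\<close>)
  then show ?thesis
    using assms(2) real_of_ereal_ge_1[OF assms(1,2)] by (simp add: lp_norm_def powr_mono2 sum_nonneg)
qed

lemma lp_norm_shift: "lp_norm p (\<lambda>n. x (n + k)) = lp_norm p x"
  and lp_mem_shift: "lp_mem p (\<lambda>n. x (n + k)) = lp_mem p x"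
proof -
  have bij: "bij_betw (\<lambda>n::int. n + k) UNIV UNIV"
    by (rule bij_betwI[where g = "\<lambda>n. n - k"]) auto
  then have "range (\<lambda>n. norm (x (n + k))) = range (\<lambda>n. norm (x n))"
    by (metis bij_betw_imp_surj_on image_image)
  moreover note infsum_reindex_bij_betw[OF bij, of "\<lambda>n. norm (x n) powr real_of_ereal p"]
    summable_on_reindex_bij_betw[OF bij, of "\<lambda>n. norm (x n) powr real_of_ereal p"]
  ultimately show "lp_norm p (\<lambda>n. x (n + k)) = lp_norm p x" "lp_mem p (\<lambda>n. x (n + k)) = lp_mem p x"
    by (simp_all add: lp_norm_def lp_mem_def)
qed

lemma lp_norm_shift_diff: "lp_norm p (\<lambda>n. x (n - k)) = lp_norm p x"
  and lp_mem_shift_diff: "lp_mem p (\<lambda>n. x (n - k)) = lp_mem p x"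
  using lp_norm_shift[of p x "- k"] lp_mem_shift[of p x "- k"] by simp_all

lemma lp_mem_scale:
  assumes "lp_mem p x"
  shows "lp_mem p (\<lambda>n. c * x n)"
proof (cases "p = \<infinity>")
  case True
  then obtain M where "\<And>n. norm (x n) \<le> M" using assms by (auto simp: lp_mem_def bdd_above_def)
  then have "norm (c * x n) \<le> norm c * M" for n by (simp add: norm_mult mult_left_mono)
  then have "bdd_above (range (\<lambda>n. norm (c * x n)))" by (rule bdd_aboveI2)
  then show ?thesis using True by (simp add: lp_mem_def)
next
  case False
  have "(\<lambda>n. norm c powr real_of_ereal p * norm (x n) powr real_of_ereal p) summable_on UNIV"
    using assms False by (intro summable_on_cmult_right) (simp add: lp_mem_def)
  then show ?thesis using False by (simp add: lp_mem_def norm_mult powr_mult)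
qed

lemma lp_norm_scale:
  assumes "1 \<le> p" "lp_mem p x"
  shows "lp_norm p (\<lambda>n. c * x n) = norm c * lp_norm p x"
proof (cases "p = \<infinity>")
  case True
  have bdd: "bdd_above (range (\<lambda>n. norm (x n)))" using assms True by (simp add: lp_mem_def)
  have bdd_c: "bdd_above (range (\<lambda>n. norm (c * x n)))"
    using lp_mem_scale[OF assms(2)] True by (simp add: lp_mem_def)
  show ?thesis
  proof (cases "c = 0")
    case False
    have "lp_norm \<infinity> (\<lambda>n. c * x n) \<le> norm c * lp_norm \<infinity> x"
      by (rule lp_norm_inf_least) (simp add: norm_mult mult_left_mono lp_norm_inf_upper[OF bdd])
    moreover have "lp_norm \<infinity> x \<le> lp_norm \<infinity> (\<lambda>n. c * x n) / norm c"
      by (rule lp_norm_inf_least)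
        (use lp_norm_inf_upper[OF bdd_c] False in \<open>simp add: norm_mult field_simps\<close>)
    then have "norm c * lp_norm \<infinity> x \<le> lp_norm \<infinity> (\<lambda>n. c * x n)"
      using False by (simp add: field_simps)
    ultimately show ?thesis using True by simp
  qed (simp add: True lp_norm_def)
next
  case False
  define r where "r = real_of_ereal p"
  have r: "r \<ge> 1" using real_of_ereal_ge_1[OF assms(1) False] by (simp add: r_def)
  have "(\<Sum>\<^sub>\<infinity>n. norm (c * x n) powr r) = norm c powr r * (\<Sum>\<^sub>\<infinity>n. norm (x n) powr r)"
    by (simp add: norm_mult powr_mult infsum_cmult_right')
  then have "lp_norm p (\<lambda>n. c * x n) = (norm c powr r) powr (1 / r) * lp_norm p x"
    using False by (simp add: lp_norm_def r_def powr_mult)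
  also have "(norm c powr r) powr (1 / r) = norm c" using r by (simp add: powr_powr)
  finally show ?thesis .
qed

lemma lp_unit_vector:
  assumes "1 \<le> p"
  obtains x where "lp_mem p x" "lp_norm p x = 1"
proof
  define x :: "int \<Rightarrow> complex" where "x = (\<lambda>n. if n = 0 then 1 else 0)"
  have supp: "{n. x n \<noteq> 0} \<subseteq> {0}" by (simp add: x_def)
  show "lp_mem p x" by (rule lp_mem_finite_support[OF _ supp]) simp
  show "lp_norm p x = 1"
  proof (cases "p = \<infinity>")
    case True
    have "lp_norm \<infinity> x \<le> 1" by (rule lp_norm_inf_least) (simp add: x_def)
    moreover have "norm (x 0) \<le> lp_norm \<infinity> x"
      using \<open>lp_mem p x\<close> True by (intro lp_norm_inf_upper) (simp add: lp_mem_def)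
    ultimately show ?thesis using True by (simp add: x_def)
  next
    case False
    then show ?thesis using lp_norm_finite_support[OF False _ supp] by (simp add: x_def)
  qed
qed

section \<open>The lower norm\<close>

locale lp_homogeneous_operator =
  fixes p :: ereal and A :: "(int \<Rightarrow> complex) \<Rightarrow> (int \<Rightarrow> complex)"
  assumes p_ge_1: "1 \<le> p"
    and lp_mem_image: "lp_mem p x \<Longrightarrow> lp_mem p (A x)"
    and homogeneous: "A (\<lambda>n. c * x n) = (\<lambda>n. c * A x n)"
begin

abbreviation values_on_sphere :: "real set" where
  "values_on_sphere \<equiv> {lp_norm p (A x) | x. lp_mem p x \<and> lp_norm p x = 1}"

lemma values_on_sphere_nonempty: "values_on_sphere \<noteq> {}"
  using lp_unit_vector[OF p_ge_1] by blast

lemma values_on_sphere_bdd_below: "bdd_below values_on_sphere"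
  unfolding bdd_below_def using lp_norm_nonneg lp_mem_image by blast

lemma lower_norm_nonneg: "0 \<le> lower_norm p A"
  unfolding lower_norm_def
  by (rule cInf_greatest[OF values_on_sphere_nonempty]) (auto intro: lp_norm_nonneg lp_mem_image)

lemma lower_norm_le:
  assumes "lp_mem p y" "0 < lp_norm p y" "lp_norm p (A y) \<le> c * lp_norm p y"
  shows "lower_norm p A \<le> c"
proof -
  define x where "x = (\<lambda>n. complex_of_real (1 / lp_norm p y) * y n)"
  have "lp_mem p x" unfolding x_def using assms(1) by (rule lp_mem_scale)
  moreover have "lp_norm p x = 1"
    unfolding x_def lp_norm_scale[OF p_ge_1 assms(1)] using assms(2) by (simp add: norm_divide)
  moreover have "lp_norm p (A x) = lp_norm p (A y) / lp_norm p y"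
    unfolding x_def homogeneous lp_norm_scale[OF p_ge_1 lp_mem_image[OF assms(1)]] using assms(2)
    by (simp add: norm_divide)
  ultimately have "lp_norm p (A y) / lp_norm p y \<in> values_on_sphere" by force
  then have "lower_norm p A \<le> lp_norm p (A y) / lp_norm p y"
    unfolding lower_norm_def by (rule cInf_lower[OF _ values_on_sphere_bdd_below])
  also have "\<dots> \<le> c" using assms(2,3) by (simp add: divide_le_eq)
  finally show ?thesis .
qed

lemma lower_norm_approx:
  assumes "0 < \<epsilon>"
  obtains x where "lp_mem p x" "lp_norm p x = 1" "lp_norm p (A x) < lower_norm p A + \<epsilon>"
proof -
  have "Inf values_on_sphere < lower_norm p A + \<epsilon>" using assms by (simp add: lower_norm_def)
  then obtain s where "s \<in> values_on_sphere" "s < lower_norm p A + \<epsilon>"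
    using cInf_lessD[OF values_on_sphere_nonempty] by blast
  then show ?thesis using that by blast
qed

end

section \<open>Discrete Schr\<ouml>dinger operators\<close>

definition schr_op :: "(int \<Rightarrow> real) \<Rightarrow> (int \<Rightarrow> complex) \<Rightarrow> (int \<Rightarrow> complex)" where
  "schr_op V x = (\<lambda>n. x (n + 1) + x (n - 1) + of_real (V n) * x n)"

lemma sturm_A_eq_schr_op: "sturm_A lam \<beta> \<theta> E = schr_op (\<lambda>n. lam * sturm_pot \<beta> \<theta> n - E)"
  by (intro ext) (simp add: sturm_A_def sturm_H_def schr_op_def algebra_simps)

lemma schr_op_scale: "schr_op V (\<lambda>n. c * x n) = (\<lambda>n. c * schr_op V x n)"
  by (intro ext) (simp add: schr_op_def algebra_simps)

lemma schr_op_support: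
  assumes "{n. y n \<noteq> 0} \<subseteq> {a..b}"
  shows "{n. schr_op V y n \<noteq> 0} \<subseteq> {a - 1..b + 1}"
proof
  fix n assume "n \<in> {n. schr_op V y n \<noteq> 0}"
  then have "y (n + 1) \<noteq> 0 \<or> y (n - 1) \<noteq> 0 \<or> y n \<noteq> 0" by (auto simp: schr_op_def)
  then show "n \<in> {a - 1..b + 1}" using assms by auto
qed

lemma schr_op_norm_le:
  "norm (schr_op V x n) \<le> norm (x (n + 1)) + norm (x (n - 1)) + \<bar>V n\<bar> * norm (x n)"
  unfolding schr_op_def by (rule order_trans[OF norm_triangle_ineq]) (simp add: norm_triangle_ineq norm_mult)

lemma lp_mem_schr_op:
  assumes "1 \<le> p" "bounded (range V)" "lp_mem p x"
  shows "lp_mem p (schr_op V x)"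
proof -
  obtain C where C: "\<And>n. \<bar>V n\<bar> \<le> C" using assms(2) by (auto simp: bounded_iff)
  then have C0: "C \<ge> 0" using abs_ge_zero order_trans by blast
  show ?thesis
  proof (cases "p = \<infinity>")
    case True
    have pt: "norm (schr_op V x n) \<le> norm (x (n + 1)) + norm (x (n - 1)) + C * norm (x n)" for n
      using schr_op_norm_le[of V x n] mult_right_mono[OF C[of n] norm_ge_zero[of "x n"]] by linarith
    obtain B where B: "\<And>n. norm (x n) \<le> B" using assms(3) True by (auto simp: lp_mem_def bdd_above_def)
    have "norm (schr_op V x n) \<le> B + B + C * B" for n
      using pt[of n] B[of "n + 1"] B[of "n - 1"] mult_left_mono[OF B[of n] C0] by linarith
    then have "bdd_above (range (\<lambda>n. norm (schr_op V x n)))" by (rule bdd_aboveI2)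
    then show ?thesis using True by (simp add: lp_mem_def)
  next
    case False
    define r where "r = real_of_ereal p"
    have r: "r \<ge> 1" using real_of_ereal_ge_1[OF assms(1) False] by (simp add: r_def)
    have sum: "(\<lambda>n. norm (x (n + k)) powr r) summable_on UNIV" for k
      using assms(3) False lp_mem_shift[of p x k] by (simp add: lp_mem_def r_def)
    have bound: "norm (schr_op V x n) powr r \<le> 2 powr r * (2 powr r * (norm (x (n + 1)) powr r
        + norm (x (n - 1)) powr r) + C powr r * norm (x n) powr r)" for n
    proof -
      have "norm (schr_op V x n) powr r
          \<le> 2 powr r * (norm (x (n + 1) + x (n - 1)) powr r + norm (of_real (V n) * x n) powr r)"
        unfolding schr_op_def using r by (rule norm_add_powr_le)
      also have "\<dots> \<le> 2 powr r * (2 powr r * (norm (x (n + 1)) powr r + norm (x (n - 1)) powr r)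
          + C powr r * norm (x n) powr r)"
        using norm_add_powr_le[OF r, of "x (n + 1)" "x (n - 1)"] C[of n] r
        by (intro mult_left_mono add_mono) (auto simp: norm_mult powr_mult intro!: mult_right_mono powr_mono2)
      finally show ?thesis .
    qed
    have "(\<lambda>n. 2 powr r * (2 powr r * (norm (x (n + 1)) powr r + norm (x (n + - 1)) powr r)
        + C powr r * norm (x (n + 0)) powr r)) summable_on UNIV"
      by (intro summable_on_cmult_right summable_on_add sum)
    then have "(\<lambda>n. 2 powr r * (2 powr r * (norm (x (n + 1)) powr r + norm (x (n - 1)) powr r)
        + C powr r * norm (x n) powr r)) summable_on UNIV"
      by simp
    then have "(\<lambda>n. norm (schr_op V x n) powr r) summable_on UNIV"
      by (rule summable_on_comparison_test) (simp_all add: bound)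
    then show ?thesis using False by (simp add: lp_mem_def r_def)
  qed
qed

lemma lp_homogeneous_operator_schr_op:
  "1 \<le> p \<Longrightarrow> bounded (range V) \<Longrightarrow> lp_homogeneous_operator p (schr_op V)"
  by unfold_locales (simp_all add: lp_mem_schr_op schr_op_scale)

lemma schr_op_mult:
  fixes \<phi> :: "int \<Rightarrow> real"
  shows "schr_op V (\<lambda>n. of_real (\<phi> n) * x n) n = of_real (\<phi> n) * schr_op V x n
     + of_real (\<phi> (n + 1) - \<phi> n) * x (n + 1) + of_real (\<phi> (n - 1) - \<phi> n) * x (n - 1)"
  by (simp add: schr_op_def algebra_simps)

lemma schr_op_mult_norm_le:
  fixes \<phi> :: "int \<Rightarrow> real"
  assumes "0 \<le> \<phi> n" "\<phi> n \<le> 1" "\<bar>\<phi> (n + 1) - \<phi> n\<bar> \<le> d" "\<bar>\<phi> (n - 1) - \<phi> n\<bar> \<le> d"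
  shows "norm (schr_op V (\<lambda>n. of_real (\<phi> n) * x n) n)
    \<le> norm (schr_op V x n) + d * norm (x (n + 1)) + d * norm (x (n - 1))"
proof -
  have "norm (schr_op V (\<lambda>n. of_real (\<phi> n) * x n) n) \<le> norm (of_real (\<phi> n) * schr_op V x n)
     + norm (of_real (\<phi> (n + 1) - \<phi> n) * x (n + 1)) + norm (of_real (\<phi> (n - 1) - \<phi> n) * x (n - 1))"
    unfolding schr_op_mult by (rule order_trans[OF norm_triangle_ineq add_right_mono[OF norm_triangle_ineq]])
  also have "norm (of_real (\<phi> n) * schr_op V x n) \<le> norm (schr_op V x n)"
    using assms by (simp add: norm_mult mult_left_le_one_le)
  also have "norm (of_real (\<phi> (n + 1) - \<phi> n) * x (n + 1)) \<le> d * norm (x (n + 1))"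
    unfolding norm_mult norm_of_real using assms by (intro mult_right_mono) auto
  also have "norm (of_real (\<phi> (n - 1) - \<phi> n) * x (n - 1)) \<le> d * norm (x (n - 1))"
    unfolding norm_mult norm_of_real using assms by (intro mult_right_mono) auto
  finally show ?thesis by simp
qed

lemma schr_op_shift:
  assumes "\<forall>n\<in>S. W (n + k) = V n" "{n. y n \<noteq> 0} \<subseteq> S"
  shows "schr_op W (\<lambda>n. y (n - k)) = (\<lambda>n. schr_op V y (n - k))"
proof
  fix n
  have "W n * y (n - k) = V (n - k) * y (n - k)"
  proof (cases "n - k \<in> S")
    case True
    then show ?thesis using assms(1) by (metis diff_add_cancel)
  qed (use assms(2) in auto)
  then show "schr_op W (\<lambda>n. y (n - k)) n = schr_op V y (n - k)"
    by (simp add: schr_op_def algebra_simps)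
qed

definition window_occurs :: "int set \<Rightarrow> (int \<Rightarrow> 'a) \<Rightarrow> (int \<Rightarrow> 'a) \<Rightarrow> bool" where
  "window_occurs S v w \<longleftrightarrow> (\<exists>k. \<forall>n\<in>S. w (n + k) = v n)"

lemma lower_norm_schr_op_le_window:
  assumes "1 \<le> p" "bounded (range W)" "finite S" "{n. y n \<noteq> 0} \<subseteq> S" "window_occurs S V W"
    and "0 < lp_norm p y" "lp_norm p (schr_op V y) \<le> c * lp_norm p y"
  shows "lower_norm p (schr_op W) \<le> c"
proof -
  obtain k where k: "\<forall>n\<in>S. W (n + k) = V n" using assms(5) by (auto simp: window_occurs_def)
  show ?thesis
  proof (rule lp_homogeneous_operator.lower_norm_le[OF lp_homogeneous_operator_schr_op[OF assms(1,2)]])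
    show "lp_mem p (\<lambda>n. y (n - k))"
      using lp_mem_finite_support[OF assms(3,4)] by (simp add: lp_mem_shift_diff)
    show "0 < lp_norm p (\<lambda>n. y (n - k))"
      "lp_norm p (schr_op W (\<lambda>n. y (n - k))) \<le> c * lp_norm p (\<lambda>n. y (n - k))"
      using assms(6,7) by (simp_all add: schr_op_shift[OF k assms(4)] lp_norm_shift_diff)
  qed
qed

section \<open>Tents\<close>

definition tent :: "nat \<Rightarrow> int \<Rightarrow> int \<Rightarrow> real" where
  "tent L c n = max 0 (1 - \<bar>real_of_int (n - c)\<bar> / real L)"

lemma tent_nonneg: "0 \<le> tent L c n"
  and tent_le_1: "tent L c n \<le> 1"
  and tent_center: "tent L c c = 1"
  by (simp_all add: tent_def)

lemma tent_eq_0: "L > 0 \<Longrightarrow> \<bar>n - c\<bar> \<ge> int L \<Longrightarrow> tent L c n = 0"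
  by (auto simp: tent_def divide_simps)

lemma abs_max_diff_le: "\<bar>max 0 u - max 0 w\<bar> \<le> \<bar>u - w :: real\<bar>"
  by (auto simp: max_def abs_if)

lemma tent_lipschitz:
  assumes "L > 0"
  shows "\<bar>tent L c m - tent L c n\<bar> \<le> \<bar>real_of_int (m - n)\<bar> / real L"
proof -
  have "\<bar>tent L c m - tent L c n\<bar>
      \<le> \<bar>(1 - \<bar>real_of_int (m - c)\<bar> / real L) - (1 - \<bar>real_of_int (n - c)\<bar> / real L)\<bar>"
    unfolding tent_def by (rule abs_max_diff_le)
  also have "\<dots> = \<bar>\<bar>real_of_int (n - c)\<bar> - \<bar>real_of_int (m - c)\<bar>\<bar> / real L"
    using assms by (simp add: diff_divide_distrib[symmetric] abs_divide)
  also have "\<dots> \<le> \<bar>real_of_int (m - n)\<bar> / real L"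
    using abs_triangle_ineq3[of "real_of_int (n - c)" "real_of_int (m - c)"]
    by (intro divide_right_mono) (auto simp: abs_minus_commute)
  finally show ?thesis .
qed

lemma tent_neighbour_diff: "L > 0 \<Longrightarrow> \<bar>tent L c (n + 1) - tent L c n\<bar> \<le> 1 / real L"
  and tent_neighbour_diff': "L > 0 \<Longrightarrow> \<bar>tent L c (n - 1) - tent L c n\<bar> \<le> 1 / real L"
  using tent_lipschitz[of L c "n + 1" n] tent_lipschitz[of L c "n - 1" n] by simp_all

lemma tent_mult_support:
  assumes "0 < L"
  shows "{n. of_real (tent L c n) * x n \<noteq> (0 :: complex)} \<subseteq> {c - int L..c + int L}"
proof
  fix n assume "n \<in> {n. of_real (tent L c n) * x n \<noteq> (0 :: complex)}"
  then have "\<not> int L \<le> \<bar>n - c\<bar>" using tent_eq_0[OF assms, where c = c] by auto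
  then show "n \<in> {c - int L..c + int L}" by auto
qed

lemma schr_op_tent_mult_norm_le:
  assumes "0 < L" "\<And>n. norm (x n) \<le> 1"
  shows "norm (schr_op V (\<lambda>n. of_real (tent L c n) * x n) n) \<le> norm (schr_op V x n) + 2 / real L"
proof -
  have "norm (schr_op V (\<lambda>n. of_real (tent L c n) * x n) n)
      \<le> norm (schr_op V x n) + 1 / real L * norm (x (n + 1)) + 1 / real L * norm (x (n - 1))"
    using assms(1) by (intro schr_op_mult_norm_le tent_nonneg tent_le_1 tent_neighbour_diff tent_neighbour_diff')
  also have "\<dots> \<le> norm (schr_op V x n) + 1 / real L * 1 + 1 / real L * 1"
    using assms(2) by (intro add_mono mult_left_mono) auto
  finally show ?thesis by simp
qed

lemma tent_grid_nonzero:
  assumes "L > 0" "tent L (j * int L) n \<noteq> 0"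
  shows "j = n div int L \<or> j = n div int L + 1"
proof -
  define q s where "q = n div int L" and "s = n mod int L"
  have n: "n = q * int L + s" and s: "0 \<le> s" "s < int L" using assms(1) by (simp_all add: q_def s_def)
  have lt: "\<bar>n - j * int L\<bar> < int L" using tent_eq_0[OF assms(1)] assms(2) by (meson not_le)
  have "\<not> j \<le> q - 1"
  proof
    assume "j \<le> q - 1"
    then have "j * int L \<le> (q - 1) * int L" by (intro mult_right_mono) auto
    then show False using lt n s by (simp add: algebra_simps abs_if split: if_splits)
  qed
  moreover have "\<not> j \<ge> q + 2"
  proof
    assume "j \<ge> q + 2"
    then have "(q + 2) * int L \<le> j * int L" by (intro mult_right_mono) auto
    then show False using lt n s by (simp add: algebra_simps abs_if split: if_splits)
  qed
  ultimately show ?thesis unfolding q_def by linarith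
qed

lemma tent_grid_partition:
  assumes "L > 0" "finite J" "n div int L \<in> J" "n div int L + 1 \<in> J"
  shows "(\<Sum>j\<in>J. tent L (j * int L) n) = 1"
proof -
  define q s where "q = n div int L" and "s = n mod int L"
  have n: "n = q * int L + s" and s: "0 \<le> s" "s < int L" using assms(1) by (simp_all add: q_def s_def)
  have "(\<Sum>j\<in>J. tent L (j * int L) n) = (\<Sum>j\<in>{q, q + 1}. tent L (j * int L) n)"
    by (rule sum.mono_neutral_right) (use assms tent_grid_nonzero in \<open>auto simp: q_def\<close>)
  also have "\<dots> = (1 - real_of_int s / real L) + real_of_int s / real L"
    using s assms(1) by (simp add: tent_def n algebra_simps divide_simps)
  finally show ?thesis by simp
qed

lemma tent_grid_partition_interval:
  assumes "L > 0" "n \<in> {a..b}"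
  shows "(\<Sum>j\<in>{a div int L..b div int L + 1}. tent L (j * int L) n) = 1"
proof (rule tent_grid_partition[OF assms(1)])
  have "a div int L \<le> n div int L" "n div int L \<le> b div int L"
    using assms by (auto intro: zdiv_mono1)
  then show "n div int L \<in> {a div int L..b div int L + 1}" "n div int L + 1 \<in> {a div int L..b div int L + 1}"
    by auto
qed simp

lemma tent_grid_sum_swap:
  assumes "L > 0" "S \<subseteq> {c..d}"
  shows "(\<Sum>j\<in>{c div int L..d div int L + 1}. \<Sum>n\<in>S. tent L (j * int L) n * f n) = (\<Sum>n\<in>S. f n)"
proof -
  have "(\<Sum>j\<in>{c div int L..d div int L + 1}. \<Sum>n\<in>S. tent L (j * int L) n * f n)
      = (\<Sum>n\<in>S. (\<Sum>j\<in>{c div int L..d div int L + 1}. tent L (j * int L) n) * f n)"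
    by (subst sum.swap) (simp add: sum_distrib_right)
  also have "\<dots> = (\<Sum>n\<in>S. f n)"
    using tent_grid_partition_interval[OF assms(1)] assms(2) by (intro sum.cong) auto
  finally show ?thesis .
qed

lemma tent_grid_diff_sum:
  assumes "L > 0" "finite J" "\<bar>m - n\<bar> = 1"
  shows "(\<Sum>j\<in>J. \<bar>tent L (j * int L) m - tent L (j * int L) n\<bar>) \<le> 4 / real L"
proof -
  define K where "K = {n div int L, n div int L + 1, m div int L, m div int L + 1}"
  have "(\<Sum>j\<in>J. \<bar>tent L (j * int L) m - tent L (j * int L) n\<bar>)
      = (\<Sum>j\<in>J \<inter> K. \<bar>tent L (j * int L) m - tent L (j * int L) n\<bar>)"
  proof (rule sum.mono_neutral_right)
    show "\<forall>i\<in>J - J \<inter> K. \<bar>tent L (i * int L) m - tent L (i * int L) n\<bar> = 0"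
    proof
      fix i assume "i \<in> J - J \<inter> K"
      then have "tent L (i * int L) m = 0" "tent L (i * int L) n = 0"
        using tent_grid_nonzero[OF assms(1), of i m] tent_grid_nonzero[OF assms(1), of i n]
        by (auto simp: K_def)
      then show "\<bar>tent L (i * int L) m - tent L (i * int L) n\<bar> = 0" by simp
    qed
  qed (use assms(2) in auto)
  also have "\<dots> \<le> of_nat (card (J \<inter> K)) * (1 / real L)"
  proof (rule sum_bounded_above)
    fix j
    have "\<bar>real_of_int (m - n)\<bar> = 1" using assms(3) by (simp only: of_int_abs[symmetric])
    then show "\<bar>tent L (j * int L) m - tent L (j * int L) n\<bar> \<le> 1 / real L"
      using tent_lipschitz[OF assms(1), of "j * int L" m n] by simp
  qed
  also have "\<dots> \<le> 4 * (1 / real L)"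
  proof -
    have "card (J \<inter> K) \<le> card K" by (rule card_mono) (auto simp: K_def)
    also have "card K \<le> 4"
      using card_length[of "[n div int L, n div int L + 1, m div int L, m div int L + 1]"] by (simp add: K_def)
    finally show ?thesis by (intro mult_right_mono) auto
  qed
  finally show ?thesis by simp
qed

text \<open>Since the tents \<open>tent L (j * L)\<close> sum to one, their \<open>r\<close>-th roots form a partition of unity
  in the \<open>\<ell>\<^sup>r\<close> sense, and the roots still have increments whose \<open>r\<close>-th powers sum to \<open>O(1 / L)\<close>.\<close>
definition tent_root :: "real \<Rightarrow> nat \<Rightarrow> int \<Rightarrow> int \<Rightarrow> real" where
  "tent_root r L j n = tent L (j * int L) n powr (1 / r)"

lemma tent_root_nonneg [simp]: "0 \<le> tent_root r L j n"
  by (simp add: tent_root_def)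

lemma tent_root_powr: "1 \<le> r \<Longrightarrow> tent_root r L j n powr r = tent L (j * int L) n"
  by (simp add: tent_root_def powr_powr tent_nonneg)

lemma tent_root_eq_0: "L > 0 \<Longrightarrow> int L \<le> \<bar>n - j * int L\<bar> \<Longrightarrow> tent_root r L j n = 0"
  by (simp add: tent_root_def tent_eq_0)

lemma tent_root_commutator_sum:
  fixes y :: "int \<Rightarrow> complex"
  assumes L: "0 < L" and J: "finite J" and r: "1 \<le> r"
  shows "(\<Sum>j\<in>J. \<Sum>n\<in>N. norm (of_real (tent_root r L j (n + 1) - tent_root r L j n) * y (n + 1)
        + of_real (tent_root r L j (n - 1) - tent_root r L j n) * y (n - 1)) powr r)
    \<le> 2 powr r * (4 / real L) * ((\<Sum>n\<in>N. norm (y (n + 1)) powr r) + (\<Sum>n\<in>N. norm (y (n - 1)) powr r))"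
proof -
  define D where "D = (\<lambda>j n m. \<bar>tent L (j * int L) m - tent L (j * int L) n\<bar>)"
  have root_diff: "\<bar>tent_root r L j m - tent_root r L j n\<bar> powr r \<le> D j n m" for j m n
    unfolding tent_root_def D_def using r by (intro powr_root_diff_le tent_nonneg) auto
  have scaled: "norm (of_real (tent_root r L j m - tent_root r L j n) * y m) powr r
      \<le> D j n m * norm (y m) powr r" for j m n
    using root_diff[of j m n] by (simp add: norm_mult powr_mult mult_right_mono del: of_real_diff)
  have pt: "norm (of_real (tent_root r L j (n + 1) - tent_root r L j n) * y (n + 1)
        + of_real (tent_root r L j (n - 1) - tent_root r L j n) * y (n - 1)) powr r
      \<le> 2 powr r * (D j n (n + 1) * norm (y (n + 1)) powr r + D j n (n - 1) * norm (y (n - 1)) powr r)" for j n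
    by (rule order_trans[OF norm_add_powr_le[OF r]]) (intro mult_left_mono add_mono scaled; simp)
  have D_sum: "(\<Sum>j\<in>J. D j n m) \<le> 4 / real L" if "\<bar>m - n\<bar> = 1" for n m
    unfolding D_def using tent_grid_diff_sum[OF L J that] .
  have "(\<Sum>j\<in>J. \<Sum>n\<in>N. norm (of_real (tent_root r L j (n + 1) - tent_root r L j n) * y (n + 1)
        + of_real (tent_root r L j (n - 1) - tent_root r L j n) * y (n - 1)) powr r)
    \<le> (\<Sum>j\<in>J. \<Sum>n\<in>N. 2 powr r * (D j n (n + 1) * norm (y (n + 1)) powr r + D j n (n - 1) * norm (y (n - 1)) powr r))"
    by (intro sum_mono pt)
  also have "\<dots> = (\<Sum>n\<in>N. 2 powr r * ((\<Sum>j\<in>J. D j n (n + 1)) * norm (y (n + 1)) powr r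
      + (\<Sum>j\<in>J. D j n (n - 1)) * norm (y (n - 1)) powr r))"
    by (subst sum.swap) (simp add: distrib_left sum_distrib_left sum_distrib_right sum.distrib)
  also have "\<dots> \<le> (\<Sum>n\<in>N. 2 powr r * (4 / real L * norm (y (n + 1)) powr r + 4 / real L * norm (y (n - 1)) powr r))"
    using D_sum by (intro sum_mono mult_left_mono add_mono mult_right_mono) auto
  also have "\<dots> = 2 powr r * (4 / real L) * ((\<Sum>n\<in>N. norm (y (n + 1)) powr r) + (\<Sum>n\<in>N. norm (y (n - 1)) powr r))"
    by (simp add: sum_distrib_left sum.distrib algebra_simps sum_divide_distrib)
  finally show ?thesis .
qed

section \<open>Approximate minimisers with uniformly bounded support\<close>

lemma le_mult_if_near_one:
  fixes \<nu> \<epsilon> a b :: real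
  assumes "0 \<le> \<nu>" "0 < \<epsilon>" "a \<le> \<nu> + \<epsilon> / 2" "1 - \<epsilon> / (2 * (\<nu> + \<epsilon>)) \<le> b"
  shows "a \<le> (\<nu> + \<epsilon>) * b"
proof -
  have "(\<nu> + \<epsilon>) * (1 - \<epsilon> / (2 * (\<nu> + \<epsilon>))) = \<nu> + \<epsilon> / 2"
    using assms(1,2) by (simp add: field_simps)
  moreover have "(\<nu> + \<epsilon>) * (1 - \<epsilon> / (2 * (\<nu> + \<epsilon>))) \<le> (\<nu> + \<epsilon>) * b"
    using assms by (intro mult_left_mono) auto
  ultimately show ?thesis using assms(3) by linarith
qed

lemma schr_op_localize_inf:
  assumes V: "bounded (range V)" and \<epsilon>: "0 < \<epsilon>" and L: "8 < \<epsilon> * real L"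
  obtains c y where "{n. y n \<noteq> 0} \<subseteq> {c..c + 2 * int L}" "0 < lp_norm \<infinity> y"
    "lp_norm \<infinity> (schr_op V y) \<le> (lower_norm \<infinity> (schr_op V) + \<epsilon>) * lp_norm \<infinity> y"
proof -
  interpret lp_homogeneous_operator \<infinity> "schr_op V"
    by (rule lp_homogeneous_operator_schr_op) (simp_all add: V)
  define \<nu> where "\<nu> = lower_norm \<infinity> (schr_op V)"
  have \<nu>: "0 \<le> \<nu>" by (simp add: \<nu>_def lower_norm_nonneg)
  have L0: "L > 0" using L \<epsilon> by (cases L) auto
  obtain x where x: "lp_mem \<infinity> x" "lp_norm \<infinity> x = 1" "lp_norm \<infinity> (schr_op V x) < \<nu> + \<epsilon> / 4"
    using lower_norm_approx[of "\<epsilon> / 4"] \<epsilon> by (auto simp: \<nu>_def)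
  have bdd_x: "bdd_above (range (\<lambda>n. norm (x n)))" using x(1) by (simp add: lp_mem_def)
  then have x_le: "norm (x n) \<le> 1" for n using lp_norm_inf_upper x(2) by metis
  have "bdd_above (range (\<lambda>n. norm (schr_op V x n)))" using lp_mem_image[OF x(1)] by (simp add: lp_mem_def)
  then have Ax_le: "norm (schr_op V x n) \<le> lp_norm \<infinity> (schr_op V x)" for n by (rule lp_norm_inf_upper)
  define \<delta> where "\<delta> = \<epsilon> / (2 * (\<nu> + \<epsilon>))"
  have "1 - \<delta> < (SUP n. norm (x n))" using x(2) \<epsilon> \<nu> by (simp add: lp_norm_def \<delta>_def)
  then obtain n0 where n0: "1 - \<delta> < norm (x n0)" using less_cSUP_iff[OF _ bdd_x] by auto
  define y where "y = (\<lambda>n. of_real (tent L n0 n) * x n)"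
  have supp: "{n. y n \<noteq> 0} \<subseteq> {n0 - int L..n0 - int L + 2 * int L}"
    using tent_mult_support[OF L0, of n0 x] by (simp add: y_def add.commute)
  have y_ge: "1 - \<delta> \<le> lp_norm \<infinity> y"
  proof -
    have "bdd_above (range (\<lambda>n. norm (y n)))"
      using lp_mem_finite_support[OF _ supp] by (simp add: lp_mem_def)
    then show ?thesis using lp_norm_inf_upper[of y n0] n0 by (simp add: y_def tent_center)
  qed
  have "2 / real L < \<epsilon> / 4" using L L0 by (simp add: field_simps)
  then have "norm (schr_op V y n) \<le> \<nu> + \<epsilon> / 2" for n
    using schr_op_tent_mult_norm_le[where x = x and V = V and c = n0 and n = n, OF L0 x_le] Ax_le[of n] x(3) unfolding y_def by linarith
  then have "lp_norm \<infinity> (schr_op V y) \<le> \<nu> + \<epsilon> / 2" by (rule lp_norm_inf_least)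
  then have "lp_norm \<infinity> (schr_op V y) \<le> (\<nu> + \<epsilon>) * lp_norm \<infinity> y"
    by (rule le_mult_if_near_one[OF \<nu> \<epsilon> _ y_ge[unfolded \<delta>_def]])
  moreover have "\<delta> \<le> 1 / 2" using \<epsilon> \<nu> by (simp add: \<delta>_def field_simps)
  with y_ge have "0 < lp_norm \<infinity> y" by linarith
  ultimately show ?thesis using that[OF supp] \<nu>_def by blast
qed

lemma schr_op_truncation_error:
  fixes N :: int
  assumes "1 \<le> N"
  shows "schr_op V (\<lambda>n. if n \<in> {-N..N} then x n else 0) n - (if n \<in> {-N..N} then schr_op V x n else 0)
    = (if n = - N - 1 then x (- N) else if n = - N then - x (- N - 1)
       else if n = N then - x (N + 1) else if n = N + 1 then x N else 0)"
proof -
  consider "n < - N - 1 \<or> N + 1 < n" | "n = - N - 1" | "n = - N" | "- N < n \<and> n < N" | "n = N" | "n = N + 1"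
    by linarith
  then show ?thesis using assms by cases (simp_all add: schr_op_def)
qed

lemma schr_op_truncation_error_sum:
  fixes N :: int and r :: real
  assumes N: "1 \<le> N" and tail: "\<And>n. N \<le> \<bar>n\<bar> \<Longrightarrow> norm (x n) powr r \<le> \<delta>"
  shows "(\<Sum>n\<in>{-N-1..N+1}. norm (schr_op V (\<lambda>n. if n \<in> {-N..N} then x n else 0) n
      - (if n \<in> {-N..N} then schr_op V x n else 0)) powr r) \<le> 4 * \<delta>"
proof -
  define e where "e n = schr_op V (\<lambda>n. if n \<in> {-N..N} then x n else 0) n
      - (if n \<in> {-N..N} then schr_op V x n else 0)" for n
  define B where "B = {- N - 1, - N, N, N + 1}"
  note e = e_def[unfolded schr_op_truncation_error[OF N]]
  have "(\<Sum>n\<in>{-N-1..N+1}. norm (e n) powr r) = (\<Sum>n\<in>B. norm (e n) powr r)"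
    using N by (intro sum.mono_neutral_right) (auto simp: B_def e)
  also have "\<dots> \<le> of_nat (card B) * \<delta>"
  proof (rule sum_bounded_above)
    fix n assume "n \<in> B"
    then have "n = - N - 1 \<or> n = - N \<or> n = N \<or> n = N + 1" by (simp add: B_def)
    then show "norm (e n) powr r \<le> \<delta>" using N by (elim disjE) (simp_all add: e tail)
  qed
  also have "\<dots> \<le> 4 * \<delta>"
  proof -
    have "0 \<le> \<delta>" using tail[of N] N by (simp add: order_trans[OF powr_ge_zero])
    moreover have "card B \<le> 4" using card_length[of "[- N - 1, - N, N, N + 1]"] by (simp add: B_def)
    ultimately show ?thesis by (intro mult_right_mono) auto
  qed
  finally show ?thesis unfolding e_def .
qed

lemma schr_op_truncation_norm_le:
  fixes N :: int
  assumes p: "1 \<le> p" "p \<noteq> \<infinity>" and Ax: "lp_mem p (schr_op V x)" and N: "1 \<le> N"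
    and tail: "\<And>n. N \<le> \<bar>n\<bar> \<Longrightarrow> norm (x n) powr real_of_ereal p \<le> \<delta>"
  shows "lp_norm p (schr_op V (\<lambda>n. if n \<in> {-N..N} then x n else 0))
    \<le> lp_norm p (schr_op V x) + (4 * \<delta>) powr (1 / real_of_ereal p)"
proof -
  define r where "r = real_of_ereal p"
  have r: "1 \<le> r" using real_of_ereal_ge_1[OF p] by (simp add: r_def)
  define y where "y = (\<lambda>n. if n \<in> {-N..N} then x n else 0)"
  define T where "T = (\<lambda>n. if n \<in> {-N..N} then schr_op V x n else 0)"
  define W where "W = {-N-1..N+1}"
  have "{n. y n \<noteq> 0} \<subseteq> {-N..N}" by (auto simp: y_def)
  from schr_op_support[OF this] have "lp_norm p (schr_op V y)
      = (\<Sum>n\<in>W. norm (T n + (schr_op V y n - T n)) powr r) powr (1 / r)"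
    by (simp add: lp_norm_finite_support[OF p(2)] W_def r_def)
  also have "\<dots> \<le> (\<Sum>n\<in>W. norm (T n) powr r) powr (1 / r) + (\<Sum>n\<in>W. norm (schr_op V y n - T n) powr r) powr (1 / r)"
    using r by (intro minkowski_sum_norm) (auto simp: W_def)
  also have "(\<Sum>n\<in>W. norm (T n) powr r) = (\<Sum>n\<in>{-N..N}. norm (schr_op V x n) powr r)"
    by (rule sum.mono_neutral_cong_right) (auto simp: W_def T_def)
  also have "(\<Sum>n\<in>{-N..N}. norm (schr_op V x n) powr r) powr (1 / r) \<le> lp_norm p (schr_op V x)"
    unfolding r_def using p Ax by (intro lp_norm_ge_finite_sum) auto
  also have "(\<Sum>n\<in>W. norm (schr_op V y n - T n) powr r) powr (1 / r) \<le> (4 * \<delta>) powr (1 / r)"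
    using schr_op_truncation_error_sum[OF N tail] r unfolding W_def y_def T_def r_def
    by (intro powr_mono2) (auto intro: sum_nonneg)
  finally show ?thesis by (simp add: y_def r_def)
qed

lemma lp_truncation_concentrated:
  assumes p: "1 \<le> p" "p \<noteq> \<infinity>" and x: "lp_mem p x" "lp_norm p x = 1" and \<delta>: "0 < \<delta>" "\<delta> \<le> 1"
  obtains N :: int where "1 \<le> N" "1 - \<delta> \<le> lp_norm p (\<lambda>n. if n \<in> {-N..N} then x n else 0)"
    "\<And>n. N \<le> \<bar>n\<bar> \<Longrightarrow> norm (x n) powr real_of_ereal p \<le> \<delta>"
proof -
  define r where "r = real_of_ereal p"
  have r: "1 \<le> r" using real_of_ereal_ge_1[OF p] by (simp add: r_def)
  define g where "g = (\<lambda>n. norm (x n) powr r)"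
  have g: "g summable_on UNIV" using x(1) p(2) by (simp add: lp_mem_def g_def r_def)
  have "0 \<le> infsum g UNIV" by (rule infsum_nonneg) (simp add: g_def)
  then have "infsum g UNIV = (infsum g UNIV powr (1 / r)) powr r" using r by (simp add: powr_powr)
  also have "infsum g UNIV powr (1 / r) = 1" using x(2) p(2) by (simp add: lp_norm_def g_def r_def)
  finally have g_sum: "infsum g UNIV = 1" by simp
  obtain N where N: "1 \<le> N" "1 - \<delta> < (\<Sum>n\<in>{-N..N}. g n)" "\<And>n. N \<le> \<bar>n\<bar> \<Longrightarrow> g n < \<delta>"
    using summable_on_tail_small[OF g _ \<delta>(1)] g_sum by (auto simp: g_def)
  show ?thesis
  proof (rule that[OF N(1)])
    have supp: "{n. (if n \<in> {-N..N} then x n else 0) \<noteq> 0} \<subseteq> {-N..N}" by auto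
    have "(1 - \<delta>) powr 1 \<le> (1 - \<delta>) powr (1 / r)" using \<delta> r by (intro powr_mono') auto
    then have "1 - \<delta> \<le> (1 - \<delta>) powr (1 / r)" using \<delta> by simp
    also have "\<dots> \<le> (\<Sum>n\<in>{-N..N}. g n) powr (1 / r)" using N(2) \<delta> r by (intro powr_mono2) auto
    also have "(\<Sum>n\<in>{-N..N}. g n) = (\<Sum>n\<in>{-N..N}. norm (if n \<in> {-N..N} then x n else 0) powr r)"
      by (rule sum.cong) (simp_all add: g_def)
    also have "\<dots> powr (1 / r) = lp_norm p (\<lambda>n. if n \<in> {-N..N} then x n else 0)"
      using lp_norm_finite_support[OF p(2) _ supp] by (simp add: r_def)
    finally show "1 - \<delta> \<le> lp_norm p (\<lambda>n. if n \<in> {-N..N} then x n else 0)" .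
    show "norm (x n) powr real_of_ereal p \<le> \<delta>" if "N \<le> \<bar>n\<bar>" for n
      using N(3)[OF that] by (simp add: g_def r_def)
  qed
qed

lemma schr_op_localize_finite_support:
  assumes p: "1 \<le> p" "p \<noteq> \<infinity>" and V: "bounded (range V)" and \<epsilon>: "0 < \<epsilon>"
  obtains N :: int and y where "{n. y n \<noteq> 0} \<subseteq> {-N..N}" "0 < lp_norm p y"
    "lp_norm p (schr_op V y) \<le> (lower_norm p (schr_op V) + \<epsilon>) * lp_norm p y"
proof -
  interpret lp_homogeneous_operator p "schr_op V" using lp_homogeneous_operator_schr_op p(1) V .
  define \<nu> where "\<nu> = lower_norm p (schr_op V)"
  define r where "r = real_of_ereal p"
  have \<nu>: "0 \<le> \<nu>" by (simp add: \<nu>_def lower_norm_nonneg)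
  have r: "1 \<le> r" using real_of_ereal_ge_1[OF p] by (simp add: r_def)
  obtain x where x: "lp_mem p x" "lp_norm p x = 1" "lp_norm p (schr_op V x) < \<nu> + \<epsilon> / 4"
    using lower_norm_approx[of "\<epsilon> / 4"] \<epsilon> by (auto simp: \<nu>_def)
  define \<delta> where "\<delta> = min ((\<epsilon> / 4) powr r / 4) (\<epsilon> / (2 * (\<nu> + \<epsilon>)))"
  have "\<epsilon> / (2 * (\<nu> + \<epsilon>)) \<le> 1 / 2" using \<epsilon> \<nu> by (simp add: field_simps)
  moreover have \<delta>: "0 < \<delta>" "\<delta> \<le> \<epsilon> / (2 * (\<nu> + \<epsilon>))" using \<epsilon> \<nu> by (auto simp: \<delta>_def)
  ultimately have \<delta>_half: "\<delta> \<le> 1 / 2" by linarith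
  have "(4 * \<delta>) powr (1 / r) \<le> ((\<epsilon> / 4) powr r) powr (1 / r)"
    using \<delta>(1) r by (intro powr_mono2) (auto simp: \<delta>_def)
  then have \<delta>_root: "(4 * \<delta>) powr (1 / r) \<le> \<epsilon> / 4" using \<epsilon> r by (simp add: powr_powr)
  obtain N where N: "1 \<le> N" "1 - \<delta> \<le> lp_norm p (\<lambda>n. if n \<in> {-N..N} then x n else 0)"
    "\<And>n. N \<le> \<bar>n\<bar> \<Longrightarrow> norm (x n) powr real_of_ereal p \<le> \<delta>"
    using lp_truncation_concentrated[OF p x(1,2) \<delta>(1)] \<delta>_half by auto
  define y where "y = (\<lambda>n. if n \<in> {-N..N} then x n else 0)"
  have "lp_norm p (schr_op V y) \<le> lp_norm p (schr_op V x) + (4 * \<delta>) powr (1 / r)"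
    unfolding y_def r_def by (rule schr_op_truncation_norm_le[OF p lp_mem_image[OF x(1)] N(1,3)])
  with x(3) \<delta>_root have "lp_norm p (schr_op V y) \<le> \<nu> + \<epsilon> / 2" by simp
  then have "lp_norm p (schr_op V y) \<le> (\<nu> + \<epsilon>) * lp_norm p y"
    by (rule le_mult_if_near_one[OF \<nu> \<epsilon>]) (use N(2) \<delta>(2) in \<open>simp add: y_def\<close>)
  moreover have "0 < lp_norm p y" using N(2) \<delta>_half by (simp add: y_def)
  moreover have "{n. y n \<noteq> 0} \<subseteq> {-N..N}" by (auto simp: y_def)
  ultimately show ?thesis using that \<nu>_def by blast
qed

lemma sum_shift_support:
  fixes y :: "int \<Rightarrow> 'a::comm_monoid_add"
  assumes "{n. y n \<noteq> 0} \<subseteq> {a..b}" "\<bar>d\<bar> \<le> 1"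
  shows "(\<Sum>n\<in>{a - 1..b + 1}. y (n + d)) = (\<Sum>n\<in>{a..b}. y n)"
proof -
  have "(\<Sum>n\<in>{a - 1..b + 1}. y (n + d)) = (\<Sum>m\<in>{a - 1 + d..b + 1 + d}. y m)"
    by (rule sum.reindex_cong[where l = "\<lambda>n. n + d", symmetric]) (auto simp: inj_on_def)
  also have "\<dots> = (\<Sum>n\<in>{a..b}. y n)"
    by (rule sum.mono_neutral_right) (use assms in auto)
  finally show ?thesis .
qed

lemma schr_op_tent_pieces_le:
  fixes y :: "int \<Rightarrow> complex"
  assumes L: "0 < L" and r: "1 \<le> r" and supp: "{n. y n \<noteq> 0} \<subseteq> {a..b}"
  defines "J \<equiv> {(a - 1) div int L..(b + 1) div int L + 1}" and "N \<equiv> {a - 1..b + 1}"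
  shows "(\<Sum>j\<in>J. \<Sum>n\<in>N. norm (schr_op V (\<lambda>n. of_real (tent_root r L j n) * y n) n) powr r) powr (1 / r)
    \<le> (\<Sum>n\<in>N. norm (schr_op V y n) powr r) powr (1 / r)
      + (2 powr (r + 3) / real L * (\<Sum>n\<in>{a..b}. norm (y n) powr r)) powr (1 / r)"
proof -
  have J: "finite J" by (simp add: J_def)
  define F where "F jn = of_real (tent_root r L (fst jn) (snd jn)) * schr_op V y (snd jn)" for jn
  define G where "G jn = (let j = fst jn; n = snd jn in
      of_real (tent_root r L j (n + 1) - tent_root r L j n) * y (n + 1)
        + of_real (tent_root r L j (n - 1) - tent_root r L j n) * y (n - 1))" for jn
  have "(\<Sum>j\<in>J. \<Sum>n\<in>N. norm (schr_op V (\<lambda>n. of_real (tent_root r L j n) * y n) n) powr r)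
      = (\<Sum>jn\<in>J \<times> N. norm (F jn + G jn) powr r)"
    by (simp add: sum.cartesian_product split_def F_def G_def Let_def schr_op_mult add.assoc)
  then have "(\<Sum>j\<in>J. \<Sum>n\<in>N. norm (schr_op V (\<lambda>n. of_real (tent_root r L j n) * y n) n) powr r) powr (1 / r)
      \<le> (\<Sum>jn\<in>J \<times> N. norm (F jn) powr r) powr (1 / r) + (\<Sum>jn\<in>J \<times> N. norm (G jn) powr r) powr (1 / r)"
    using J r by (simp add: minkowski_sum_norm N_def)
  also have "(\<Sum>jn\<in>J \<times> N. norm (F jn) powr r)
      = (\<Sum>j\<in>J. \<Sum>n\<in>N. tent L (j * int L) n * norm (schr_op V y n) powr r)"
    by (simp add: sum.cartesian_product split_def F_def norm_mult powr_mult tent_root_powr[OF r])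
  also have "\<dots> = (\<Sum>n\<in>N. norm (schr_op V y n) powr r)"
    unfolding J_def N_def using L by (rule tent_grid_sum_swap) simp
  also have "(\<Sum>jn\<in>J \<times> N. norm (G jn) powr r) \<le> 2 powr (r + 3) / real L * (\<Sum>n\<in>{a..b}. norm (y n) powr r)"
  proof -
    have "(\<Sum>jn\<in>J \<times> N. norm (G jn) powr r)
        \<le> 2 powr r * (4 / real L) * ((\<Sum>n\<in>N. norm (y (n + 1)) powr r) + (\<Sum>n\<in>N. norm (y (n + - 1)) powr r))"
      using tent_root_commutator_sum[OF L J r, where N = N and y = y] by (simp add: sum.cartesian_product split_def G_def Let_def)
    also have "\<dots> = 2 powr r * 8 / real L * (\<Sum>n\<in>{a..b}. norm (y n) powr r)"
    proof -
      have "(\<Sum>n\<in>N. norm (y (n + d)) powr r) = (\<Sum>n\<in>{a..b}. norm (y n) powr r)" if "\<bar>d\<bar> \<le> 1" for d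
        unfolding N_def by (rule sum_shift_support) (use supp that in auto)
      from this[of 1] this[of "- 1"] show ?thesis by simp
    qed
    finally show ?thesis by (simp add: powr_add)
  qed
  then have "(\<Sum>jn\<in>J \<times> N. norm (G jn) powr r) powr (1 / r)
      \<le> (2 powr (r + 3) / real L * (\<Sum>n\<in>{a..b}. norm (y n) powr r)) powr (1 / r)"
    using r by (intro powr_mono2) (auto intro: sum_nonneg)
  finally show ?thesis by simp
qed

lemma schr_op_localize_partition:
  assumes p: "1 \<le> p" "p \<noteq> \<infinity>" and L: "0 < L" and supp: "{n. y n \<noteq> 0} \<subseteq> {a..b}"
    and y: "0 < lp_norm p y" and c: "0 \<le> c" "lp_norm p (schr_op V y) \<le> c * lp_norm p y"
  obtains j z where "{n. z n \<noteq> 0} \<subseteq> {j * int L - int L..j * int L + int L}" "0 < lp_norm p z"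
    "lp_norm p (schr_op V z)
      \<le> (c + (2 powr (real_of_ereal p + 3) / real L) powr (1 / real_of_ereal p)) * lp_norm p z"
proof -
  define r where "r = real_of_ereal p"
  have r: "1 \<le> r" using real_of_ereal_ge_1[OF p] by (simp add: r_def)
  define C where "C = c + (2 powr (r + 3) / real L) powr (1 / r)"
  define J where "J = {(a - 1) div int L..(b + 1) div int L + 1}"
  define z where "z = (\<lambda>j n. of_real (tent_root r L j n) * y n)"
  define Y where "Y = (\<Sum>n\<in>{a..b}. norm (y n) powr r)"
  define Z where "Z = (\<lambda>j. \<Sum>n\<in>{a..b}. tent L (j * int L) n * norm (y n) powr r)"
  define A where "A = (\<lambda>j. \<Sum>n\<in>{a - 1..b + 1}. norm (schr_op V (z j) n) powr r)"
  have C: "0 \<le> C" and Y: "0 \<le> Y" and A: "0 \<le> A j" for j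
    using c(1) by (simp_all add: C_def Y_def A_def sum_nonneg)
  have z_supp: "{n. z j n \<noteq> 0} \<subseteq> {a..b}" for j using supp by (auto simp: z_def)
  have norm_y: "lp_norm p y = Y powr (1 / r)"
    using lp_norm_finite_support[OF p(2) _ supp] by (simp add: Y_def r_def)
  have norm_z: "lp_norm p (z j) = Z j powr (1 / r)" for j
    using lp_norm_finite_support[OF p(2) _ z_supp]
    by (simp add: Z_def z_def r_def norm_mult powr_mult tent_root_powr[OF r[unfolded r_def]])
  have norm_Az: "lp_norm p (schr_op V (z j)) = A j powr (1 / r)" for j
    using lp_norm_finite_support[OF p(2) _ schr_op_support[OF z_supp]] by (simp add: A_def r_def)
  have "(sum A J) powr (1 / r) \<le> lp_norm p (schr_op V y) + (2 powr (r + 3) / real L * Y) powr (1 / r)"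
    using schr_op_tent_pieces_le[OF L r supp, of V] lp_norm_finite_support[OF p(2) _ schr_op_support[OF supp]]
    by (simp add: A_def J_def z_def Y_def r_def)
  also have "\<dots> \<le> C * Y powr (1 / r)"
  proof -
    have split: "(2 powr (r + 3) / real L * Y) powr (1 / r) = (2 powr (r + 3) / real L) powr (1 / r) * Y powr (1 / r)"
      by (rule powr_mult)
    show ?thesis using c(2) unfolding split C_def distrib_right norm_y by linarith
  qed
  finally have "sum A J \<le> C powr r * sum Z J"
    using powr_root_le_iff[OF r _ Y C] tent_grid_sum_swap[OF L, of "{a..b}" "a - 1" "b + 1"]
    by (simp add: sum_nonneg A Z_def Y_def J_def)
  moreover have "0 < sum Z J"
    using tent_grid_sum_swap[OF L, of "{a..b}" "a - 1" "b + 1"] y norm_y Y by (cases "Y = 0") (auto simp: Z_def Y_def J_def)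
  ultimately obtain j where j: "0 < Z j" "A j \<le> C powr r * Z j"
    by (rule sum_le_mult_sum_imp_ex[of J Z A, rotated 3]) (auto simp: J_def Z_def A tent_nonneg intro: sum_nonneg)
  show ?thesis
  proof (rule that)
    show "{n. z j n \<noteq> 0} \<subseteq> {j * int L - int L..j * int L + int L}"
      using tent_root_eq_0[OF L] by (force simp: z_def)
    show "0 < lp_norm p (z j)" using j(1) by (simp add: norm_z)
    show "lp_norm p (schr_op V (z j))
      \<le> (c + (2 powr (real_of_ereal p + 3) / real L) powr (1 / real_of_ereal p)) * lp_norm p (z j)"
      using j(2) powr_root_le_iff[OF r A[of j] _ C, where y = "Z j"] j(1) by (simp add: norm_Az norm_z C_def r_def)
  qed
qed

lemma schr_op_uniform_localization:
  assumes p: "1 \<le> p" and \<epsilon>: "0 < \<epsilon>"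
  obtains L :: nat where "\<And>V. bounded (range V) \<Longrightarrow> \<exists>c y. {n. y n \<noteq> 0} \<subseteq> {c..c + int L} \<and> 0 < lp_norm p y
    \<and> lp_norm p (schr_op V y) \<le> (lower_norm p (schr_op V) + \<epsilon>) * lp_norm p y"
proof (cases "p = \<infinity>")
  case True
  obtain L0 :: nat where "8 / \<epsilon> < real L0" using reals_Archimedean2 by blast
  then have "8 < \<epsilon> * real L0" using \<epsilon> by (simp add: field_simps)
  then show ?thesis
    using that[of "2 * L0"] schr_op_localize_inf[where L = L0 and \<epsilon> = \<epsilon>] \<epsilon> True by (metis of_nat_mult of_nat_numeral)
next
  case False
  define r where "r = real_of_ereal p"
  have r: "1 \<le> r" using real_of_ereal_ge_1[OF p False] by (simp add: r_def)
  obtain L0 :: nat where L0: "2 powr (r + 3) / (\<epsilon> / 2) powr r < real L0" using reals_Archimedean2 by blast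
  have "0 < 2 powr (r + 3) / (\<epsilon> / 2) powr r" using \<epsilon> by simp
  then have L0_pos: "0 < L0" using L0 by linarith
  have "2 powr (r + 3) / real L0 \<le> (\<epsilon> / 2) powr r" using L0 L0_pos \<epsilon> by (simp add: field_simps)
  then have "(2 powr (r + 3) / real L0) powr (1 / r) \<le> ((\<epsilon> / 2) powr r) powr (1 / r)"
    using r by (intro powr_mono2) auto
  then have small: "(2 powr (r + 3) / real L0) powr (1 / r) \<le> \<epsilon> / 2" using r \<epsilon> by (simp add: powr_powr)
  show ?thesis
  proof (rule that[of "2 * L0"])
    fix V :: "int \<Rightarrow> real" assume V: "bounded (range V)"
    define \<nu> where "\<nu> = lower_norm p (schr_op V)"
    have \<nu>: "0 \<le> \<nu>" unfolding \<nu>_def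
      by (rule lp_homogeneous_operator.lower_norm_nonneg[OF lp_homogeneous_operator_schr_op[OF p V]])
    obtain N y where y: "{n. y n \<noteq> 0} \<subseteq> {-N..N}" "0 < lp_norm p y"
      "lp_norm p (schr_op V y) \<le> (\<nu> + \<epsilon> / 2) * lp_norm p y"
      unfolding \<nu>_def by (rule schr_op_localize_finite_support[OF p False V, of "\<epsilon> / 2"]) (use \<epsilon> in simp_all)
    obtain j z where z: "{n. z n \<noteq> 0} \<subseteq> {j * int L0 - int L0..j * int L0 + int L0}" "0 < lp_norm p z"
      "lp_norm p (schr_op V z) \<le> (\<nu> + \<epsilon> / 2 + (2 powr (r + 3) / real L0) powr (1 / r)) * lp_norm p z"
      unfolding r_def by (rule schr_op_localize_partition[OF p False L0_pos y(1,2) _ y(3)]) (use \<nu> \<epsilon> in simp_all)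
    have "(\<nu> + \<epsilon> / 2 + (2 powr (r + 3) / real L0) powr (1 / r)) * lp_norm p z \<le> (\<nu> + \<epsilon>) * lp_norm p z"
      using small z(2) by (intro mult_right_mono) auto
    with z(3) have "lp_norm p (schr_op V z) \<le> (\<nu> + \<epsilon>) * lp_norm p z" by linarith
    moreover have "{n. z n \<noteq> 0} \<subseteq> {j * int L0 - int L0..(j * int L0 - int L0) + int (2 * L0)}" using z(1) by auto
    ultimately show "\<exists>c y. {n. y n \<noteq> 0} \<subseteq> {c..c + int (2 * L0)} \<and> 0 < lp_norm p y
      \<and> lp_norm p (schr_op V y) \<le> (lower_norm p (schr_op V) + \<epsilon>) * lp_norm p y"
      using z(2) \<nu>_def by blast
  qed
qed

section \<open>Windows of Sturmian potentials\<close>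

lemma floor_add_small: "0 \<le> \<delta> \<Longrightarrow> \<delta> < of_int \<lfloor>t\<rfloor> + 1 - t \<Longrightarrow> \<lfloor>t + \<delta>\<rfloor> = \<lfloor>t\<rfloor>"
  for t \<delta> :: real
  by (simp add: floor_eq_iff) linarith

lemma floor_rat_add_small:
  fixes N q :: int and \<delta> :: real
  assumes "0 < q" "0 \<le> \<delta>" "\<delta> < 1 / q"
  shows "\<lfloor>of_int N / of_int q + \<delta>\<rfloor> = \<lfloor>of_int N / of_int q :: real\<rfloor>"
proof (rule floor_add_small[OF assms(2)])
  define f where "f = \<lfloor>of_int N / of_int q :: real\<rfloor>"
  have "f = N div q" by (simp add: f_def floor_divide_of_int_eq)
  then have "N = f * q + N mod q" "N mod q < q" using assms(1) by simp_all
  then have "N + 1 \<le> (f + 1) * q" by (simp add: distrib_right)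
  then have "of_int N + 1 \<le> (of_int f + 1) * (of_int q :: real)"
    by (metis of_int_add of_int_le_iff of_int_mult of_int_1)
  then have "of_int N / of_int q + 1 / of_int q \<le> (of_int f + 1 :: real)" using assms(1) by (simp add: field_simps)
  then show "\<delta> < of_int f + 1 - of_int N / of_int q" using assms(3) by linarith
qed

lemma irrational_mesh:
  fixes \<alpha> s \<eta> :: real
  assumes "\<alpha> \<notin> \<rat>" "0 < \<eta>"
  obtains k j :: int where "s \<le> of_int k * \<alpha> - of_int j" "of_int k * \<alpha> - of_int j < s + \<eta>"
proof -
  obtain h k :: int where "\<bar>of_int k * \<alpha> - of_int h - (s + \<eta> / 2)\<bar> < \<eta> / 2"
    by (rule sequence_of_fractional_parts_is_dense[OF assms(1), of "\<eta> / 2" "s + \<eta> / 2"]) (use assms(2) in auto)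
  then show ?thesis using that[of k h] unfolding abs_less_iff by linarith
qed

lemma floor_stable_finite:
  fixes T :: "real set"
  assumes "finite T"
  obtains \<eta> where "0 < \<eta>" "\<And>t \<delta>. t \<in> T \<Longrightarrow> 0 \<le> \<delta> \<Longrightarrow> \<delta> < \<eta> \<Longrightarrow> \<lfloor>t + \<delta>\<rfloor> = \<lfloor>t\<rfloor>"
proof
  define \<eta> where "\<eta> = Min (insert 1 ((\<lambda>t. of_int \<lfloor>t\<rfloor> + 1 - t) ` T))"
  show "0 < \<eta>" unfolding \<eta>_def using assms by (subst Min_gr_iff) auto
  show "\<lfloor>t + \<delta>\<rfloor> = \<lfloor>t\<rfloor>" if "t \<in> T" "0 \<le> \<delta>" "\<delta> < \<eta>" for t \<delta>
  proof (rule floor_add_small[OF that(2)])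
    have "\<eta> \<le> of_int \<lfloor>t\<rfloor> + 1 - t" using that(1) assms by (simp add: \<eta>_def)
    then show "\<delta> < of_int \<lfloor>t\<rfloor> + 1 - t" using that(3) by linarith
  qed
qed

lemma sturm_pot_floor_diff:
  assumes "0 \<le> \<beta>" "\<beta> \<le> 1"
  shows "sturm_pot \<beta> \<theta> n = of_int (\<lfloor>of_int (n + 1) * \<beta> + \<theta>\<rfloor> - \<lfloor>of_int n * \<beta> + \<theta>\<rfloor>)"
proof -
  define t where "t = of_int n * \<beta> + \<theta>"
  have t: "of_int (n + 1) * \<beta> + \<theta> = t + \<beta>" by (simp add: t_def algebra_simps)
  have "frac t = t - \<lfloor>t\<rfloor>" by (simp add: frac_def)
  moreover have "0 \<le> frac t" "frac t < 1" by (simp_all add: frac_lt_1)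
  ultimately have "\<lfloor>t + \<beta>\<rfloor> = (if 1 - \<beta> \<le> frac t then \<lfloor>t\<rfloor> + 1 else \<lfloor>t\<rfloor>)"
    using assms by (simp add: floor_eq_iff) linarith
  then show ?thesis unfolding t using frac_lt_1[of t] by (simp add: sturm_pot_def t_def[symmetric] indicator_def)
qed

lemma sturm_pot_window_occurs:
  assumes "0 \<le> \<beta>" "\<beta> \<le> 1" "0 \<le> \<beta>'" "\<beta>' \<le> 1"
    and "\<And>n. n \<in> {a..b + 1} \<Longrightarrow> \<lfloor>of_int (n + k) * \<beta>' + \<theta>'\<rfloor> = \<lfloor>of_int n * \<beta> + \<theta>\<rfloor> + j"
  shows "window_occurs {a..b} (sturm_pot \<beta> \<theta>) (sturm_pot \<beta>' \<theta>')"
  unfolding window_occurs_def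
proof (intro exI ballI)
  fix n assume "n \<in> {a..b}"
  then have "n + 1 \<in> {a..b + 1}" "n \<in> {a..b + 1}" by auto
  note assms(5)[OF this(1)] assms(5)[OF this(2)]
  then show "sturm_pot \<beta>' \<theta>' (n + k) = sturm_pot \<beta> \<theta> n"
    using sturm_pot_floor_diff[OF assms(1,2)] sturm_pot_floor_diff[OF assms(3,4)] by (simp add: ac_simps)
qed

context irrational_in_unit_interval
begin

lemma sturm_window_occurs_in_approx:
  "\<forall>\<^sub>F m in sequentially. window_occurs {a..b} (sturm_pot \<alpha> \<theta>) (sturm_pot (cf_approx \<alpha> m) 0)"
proof -
  define T where "T = (\<lambda>n. of_int n * \<alpha> + \<theta>) ` {a..b + 1}"
  have "finite T" by (simp add: T_def)
  from floor_stable_finite[OF this] obtain \<eta> where \<eta>: "0 < \<eta>"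
    and stable: "\<And>t \<delta>. t \<in> T \<Longrightarrow> 0 \<le> \<delta> \<Longrightarrow> \<delta> < \<eta> \<Longrightarrow> \<lfloor>t + \<delta>\<rfloor> = \<lfloor>t\<rfloor>"
    by blast
  define B where "B = real_of_int (\<bar>a\<bar> + \<bar>b + 1\<bar>) + 1"
  have B: "0 < B" by (simp add: B_def)
  have "\<forall>\<^sub>F m in sequentially. 3 / \<eta> < real_of_int (cf_q \<alpha> m)"
    using cf_q_at_top by (simp add: filterlim_at_top_dense)
  moreover have "\<forall>\<^sub>F m in sequentially. dist (cf_approx \<alpha> m) \<alpha> < \<eta> / (3 * B)"
    using cf_approx_tendsto \<eta> B by (intro tendstoD) simp_all
  ultimately show ?thesis
  proof eventually_elim
    case (elim m)
    define q where "q = real_of_int (cf_q \<alpha> m)"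
    have "0 < q" using cf_q_pos[of m] by (simp add: q_def)
    then have inv_q: "1 / q < \<eta> / 3" using elim(1) \<eta> by (simp add: q_def field_simps)
    have B_err: "B * \<bar>\<alpha> - cf_approx \<alpha> m\<bar> < \<eta> / 3"
      using elim(2) B by (simp add: dist_real_def abs_minus_commute field_simps)
    obtain k j :: int where kj: "\<theta> + \<eta> / 3 \<le> of_int k * cf_approx \<alpha> m - of_int j"
      "of_int k * cf_approx \<alpha> m - of_int j < \<theta> + \<eta> / 3 + 1 / q"
      using cf_approx_mesh unfolding q_def by blast
    show ?case
    proof (rule sturm_pot_window_occurs[where k = k and j = j])
      fix n assume n: "n \<in> {a..b + 1}"
      define \<delta> where "\<delta> = of_int n * (cf_approx \<alpha> m - \<alpha>) + (of_int k * cf_approx \<alpha> m - of_int j - \<theta>)"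
      have "\<bar>of_int n * (cf_approx \<alpha> m - \<alpha>)\<bar> \<le> B * \<bar>\<alpha> - cf_approx \<alpha> m\<bar>"
        using n by (auto simp: B_def abs_mult abs_minus_commute intro!: mult_right_mono)
      then have "0 \<le> \<delta>" "\<delta> < \<eta>" using kj inv_q B_err by (auto simp: \<delta>_def abs_le_iff)
      moreover have "of_int n * \<alpha> + \<theta> \<in> T" unfolding T_def using n by (rule imageI)
      ultimately have "\<lfloor>of_int n * \<alpha> + \<theta> + \<delta>\<rfloor> = \<lfloor>of_int n * \<alpha> + \<theta>\<rfloor>" using stable by blast
      moreover have "of_int (n + k) * cf_approx \<alpha> m + 0 = (of_int n * \<alpha> + \<theta> + \<delta>) + of_int j"
        by (simp add: \<delta>_def algebra_simps)
      ultimately show "\<lfloor>of_int (n + k) * cf_approx \<alpha> m + 0\<rfloor> = \<lfloor>of_int n * \<alpha> + \<theta>\<rfloor> + j"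
        by simp
    qed (use pos less_1 cf_approx_nonneg cf_approx_le_1 in auto)
  qed
qed

lemma approx_window_occurs_in_sturm:
  "\<forall>\<^sub>F m in sequentially. \<forall>c. window_occurs {c..c + int L} (sturm_pot (cf_approx \<alpha> m) 0) (sturm_pot \<alpha> \<theta>)"
proof -
  have "window_occurs {c..c + int L} (sturm_pot (cf_approx \<alpha> m) 0) (sturm_pot \<alpha> \<theta>)" if m: "4 * L + 5 \<le> m" for m c
  proof -
    define q where "q = real_of_int (cf_q \<alpha> m)"
    define e where "e = \<bar>\<alpha> - cf_approx \<alpha> m\<bar>"
    have "0 < m" using m by simp
    then have err: "q * e \<le> 1 / q" and "real m \<le> q"
      using cf_approx_error_mult cf_q_ge_index by (simp_all add: q_def e_def)
    then have q: "4 * real L + 4 < q" using m by linarith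
    then have q_pos: "0 < q" by linarith
    have "4 * (real L + 1) * (q * e) \<le> 4 * (real L + 1) * (1 / q)" using err by (intro mult_left_mono) auto
    also have "\<dots> < 1" using q q_pos by (simp add: field_simps)
    finally have L_err: "(real L + 1) * e < 1 / q / 4" using q_pos by (simp add: field_simps)
    obtain K j :: int where Kj: "of_int c * cf_approx \<alpha> m - \<theta> + 1 / q / 4 \<le> of_int K * \<alpha> - of_int j"
      "of_int K * \<alpha> - of_int j < of_int c * cf_approx \<alpha> m - \<theta> + 1 / q / 4 + 1 / q / 4"
      using irrational_mesh[OF irrational, where s = "of_int c * cf_approx \<alpha> m - \<theta> + 1 / q / 4"
          and \<eta> = "1 / q / 4"] q_pos by auto
    show ?thesis
    proof (rule sturm_pot_window_occurs[where k = "K - c" and j = j])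
      fix n assume n: "n \<in> {c..c + int L + 1}"
      define \<delta> where "\<delta> = (of_int K * \<alpha> + \<theta> - of_int j - of_int c * cf_approx \<alpha> m)
        + of_int (n - c) * (\<alpha> - cf_approx \<alpha> m)"
      have "\<bar>of_int (n - c) * (\<alpha> - cf_approx \<alpha> m)\<bar> \<le> (real L + 1) * e"
        using n by (auto simp: e_def abs_mult intro!: mult_right_mono)
      then have \<delta>: "0 \<le> \<delta>" "\<delta> < 1 / q" using Kj L_err by (auto simp: \<delta>_def abs_le_iff)
      have "\<lfloor>of_int n * cf_approx \<alpha> m + \<delta>\<rfloor> = \<lfloor>of_int n * cf_approx \<alpha> m\<rfloor>"
        using floor_rat_add_small[of "cf_q \<alpha> m" \<delta> "n * cf_p \<alpha> m"] \<delta> q_pos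
        by (simp add: cf_approx_def q_def)
      moreover have "of_int (n + (K - c)) * \<alpha> + \<theta> = of_int n * cf_approx \<alpha> m + \<delta> + of_int j"
        by (simp add: \<delta>_def algebra_simps)
      ultimately show "\<lfloor>of_int (n + (K - c)) * \<alpha> + \<theta>\<rfloor> = \<lfloor>of_int n * cf_approx \<alpha> m + 0\<rfloor> + j"
        by simp
    qed (use pos less_1 cf_approx_nonneg cf_approx_le_1 in auto)
  qed
  then show ?thesis unfolding eventually_sequentially by blast
qed

end

section \<open>Convergence of the lower norms\<close>

lemma bounded_sturm_potential: "bounded (range (\<lambda>n. lam * sturm_pot \<beta> \<theta> n - E))"
  by (rule boundedI[where B = "\<bar>lam\<bar> + \<bar>E\<bar>"]) (auto simp: sturm_pot_def indicator_def)

lemma window_occurs_comp: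
  assumes "window_occurs S v w"
  shows "window_occurs S (\<lambda>n. f (v n)) (\<lambda>n. f (w n))"
proof -
  obtain k where "\<forall>n\<in>S. w (n + k) = v n" using assms by (auto simp: window_occurs_def)
  then show ?thesis unfolding window_occurs_def by (intro exI[of _ k]) simp
qed

lemma lower_norm_sturm_A_le_window:
  assumes "1 \<le> p" "finite S" "{n. y n \<noteq> 0} \<subseteq> S" "window_occurs S (sturm_pot \<beta> \<theta>) (sturm_pot \<beta>' \<theta>')"
    and "0 < lp_norm p y" "lp_norm p (sturm_A lam \<beta> \<theta> E y) \<le> c * lp_norm p y"
  shows "lower_norm p (sturm_A lam \<beta>' \<theta>' E) \<le> c"
  using lower_norm_schr_op_le_window[OF assms(1) bounded_sturm_potential assms(2,3)
      window_occurs_comp[OF assms(4)] assms(5)] assms(6)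
  by (simp add: sturm_A_eq_schr_op)

lemma sturm_A_uniform_localization:
  assumes "1 \<le> p" "0 < \<epsilon>"
  obtains L :: nat where "\<And>\<beta> \<theta>. \<exists>c y. {n. y n \<noteq> 0} \<subseteq> {c..c + int L} \<and> 0 < lp_norm p y
    \<and> lp_norm p (sturm_A lam \<beta> \<theta> E y) \<le> (lower_norm p (sturm_A lam \<beta> \<theta> E) + \<epsilon>) * lp_norm p y"
  using schr_op_uniform_localization[OF assms] bounded_sturm_potential by (metis sturm_A_eq_schr_op)

context irrational_in_unit_interval
begin

lemma lower_norm_cf_approx_le:
  assumes "1 \<le> p" "0 < \<epsilon>"
  shows "\<forall>\<^sub>F m in sequentially.
    lower_norm p (sturm_A lam (cf_approx \<alpha> m) 0 E) \<le> lower_norm p (sturm_A lam \<alpha> \<theta> E) + \<epsilon>"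
proof -
  obtain L where "\<And>\<beta> \<theta>. \<exists>c y. {n. y n \<noteq> 0} \<subseteq> {c..c + int L} \<and> 0 < lp_norm p y
    \<and> lp_norm p (sturm_A lam \<beta> \<theta> E y) \<le> (lower_norm p (sturm_A lam \<beta> \<theta> E) + \<epsilon>) * lp_norm p y"
    using sturm_A_uniform_localization[OF assms] by blast
  then obtain c y where y: "{n. y n \<noteq> 0} \<subseteq> {c..c + int L}" "0 < lp_norm p y"
    "lp_norm p (sturm_A lam \<alpha> \<theta> E y) \<le> (lower_norm p (sturm_A lam \<alpha> \<theta> E) + \<epsilon>) * lp_norm p y"
    by blast
  from sturm_window_occurs_in_approx[where a = c and b = "c + int L" and \<theta> = \<theta>] show ?thesis
    by (rule eventually_mono) (rule lower_norm_sturm_A_le_window[OF assms(1) _ y(1) _ y(2,3)], simp_all)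
qed

lemma lower_norm_le_cf_approx:
  assumes "1 \<le> p" "0 < \<epsilon>"
  shows "\<forall>\<^sub>F m in sequentially.
    lower_norm p (sturm_A lam \<alpha> \<theta> E) \<le> lower_norm p (sturm_A lam (cf_approx \<alpha> m) 0 E) + \<epsilon>"
proof -
  obtain L where L: "\<And>\<beta> \<theta>. \<exists>c y. {n. y n \<noteq> 0} \<subseteq> {c..c + int L} \<and> 0 < lp_norm p y
    \<and> lp_norm p (sturm_A lam \<beta> \<theta> E y) \<le> (lower_norm p (sturm_A lam \<beta> \<theta> E) + \<epsilon>) * lp_norm p y"
    using sturm_A_uniform_localization[OF assms] by blast
  from approx_window_occurs_in_sturm[where L = L and \<theta> = \<theta>] show ?thesis
  proof (rule eventually_mono)
    fix m assume windows: "\<forall>c. window_occurs {c..c + int L} (sturm_pot (cf_approx \<alpha> m) 0) (sturm_pot \<alpha> \<theta>)"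
    obtain c y where "{n. y n \<noteq> 0} \<subseteq> {c..c + int L}" "0 < lp_norm p y" "lp_norm p (sturm_A lam (cf_approx \<alpha> m) 0 E y)
        \<le> (lower_norm p (sturm_A lam (cf_approx \<alpha> m) 0 E) + \<epsilon>) * lp_norm p y"
      using L by blast
    then show "lower_norm p (sturm_A lam \<alpha> \<theta> E) \<le> lower_norm p (sturm_A lam (cf_approx \<alpha> m) 0 E) + \<epsilon>"
      using windows by (intro lower_norm_sturm_A_le_window[OF assms(1)]) auto
  qed
qed

end

theorem lemma5p10:
  fixes p :: ereal and \<alpha> \<theta> lam E :: real
  assumes "1 \<le> p"
    and "0 \<le> \<alpha>" "\<alpha> \<le> 1" "\<alpha> \<notin> \<rat>"
    and "0 \<le> \<theta>" "\<theta> < 1"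
  shows "(\<lambda>m. lower_norm p (sturm_A lam (cf_approx \<alpha> m) 0 E))
           \<longlonglongrightarrow> lower_norm p (sturm_A lam \<alpha> \<theta> E)"
proof (rule tendstoI)
  have "0 < \<alpha>" "\<alpha> < 1" using assms(2-4) Rats_0 Rats_1 by (auto simp: order_le_less)
  then interpret irrational_in_unit_interval \<alpha> using assms(4) by unfold_locales
  fix \<epsilon> :: real assume "0 < \<epsilon>"
  then have \<epsilon>: "0 < \<epsilon> / 2" by simp
  from lower_norm_cf_approx_le[OF assms(1) \<epsilon>] lower_norm_le_cf_approx[OF assms(1) \<epsilon>]
  have "\<forall>\<^sub>F m in sequentially.
    lower_norm p (sturm_A lam (cf_approx \<alpha> m) 0 E) \<le> lower_norm p (sturm_A lam \<alpha> \<theta> E) + \<epsilon> / 2 \<and>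
    lower_norm p (sturm_A lam \<alpha> \<theta> E) \<le> lower_norm p (sturm_A lam (cf_approx \<alpha> m) 0 E) + \<epsilon> / 2"
    by (rule eventually_conj)
  then show "\<forall>\<^sub>F m in sequentially.
    dist (lower_norm p (sturm_A lam (cf_approx \<alpha> m) 0 E)) (lower_norm p (sturm_A lam \<alpha> \<theta> E)) < \<epsilon>"
    by (rule eventually_mono) (use \<open>0 < \<epsilon>\<close> in \<open>auto simp: dist_real_def\<close>)
qed

end
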